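(* Let $0<\beta<1+O(n^{-1/2})$ and write $\beta=1-\delta$. Consider the normalized magnetization chain $(S_t)$ of the Glauber dynamics for the mean-field Ising model on $n$ vertices, started from an arbitrary state $s_0$, and let $\tau_0=\min\{t:|S_t|\le n^{-1}\}$. For $\gamma>0$ define $$t_n(\gamma)=\begin{cases}\frac{n}{2\delta}\log(\delta^2n)+(\gamma+3)\frac n\delta, & \text{if }\delta^2n\to\infty,\\[2pt] \big(200+6\gamma(1+6\sqrt{\delta^2n})\big)n^{3/2}, & \text{if }\delta^2n=O(1).\end{cases}$$ Then there exists a constant $c>0$ such that $\mathbb{P}_{s_0}(\tau_0>t_n(\gamma))\le c/\sqrt{\gamma}$ for all $\gamma>0$, all starting states $s_0$ and all sufficiently large $n$.
   Context: For $n\ge1$ and $\beta\ge0$, the mean-field Ising measure on $\{1,-1\}^n$ is $\mu_n(\sigma)\propto\exp\big(\frac{\beta}{n}\sum_{x<y}\sigma(x)\sigma(y)\big)$; the heat-bath Glauber dynamics chooses a uniform vertex and resamples its spin from $\mu_n$ conditioned on the other spins. The normalized magnetization chain $S_t=\frac1n\sum_iX_t(i)$ is a Markov chain on $\{-1,-1+\frac2n,\dots,1\}$ with $P(s,s-\frac2n)=\frac{1+s}{2}\cdot\frac{1-\tanh(\beta(s-1/n))}{2}$, $P(s,s+\frac2n)=\frac{1-s}{2}\cdot\frac{1+\tanh(\beta(s+1/n))}{2}$, and remaining mass on $P(s,s)$. Here $\delta=\delta(n)$ is a sequence, and the two cases refer to its asymptotic behaviour. *)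

theory Defs
  imports Complex_Main "HOL-Library.Landau_Symbols"
begin

text \<open>States of the magnetization chain on n vertices are encoded by k in {0..n}
  (number of + spins); the corresponding magnetization is s = (2k - n)/n.\<close>

definition magn :: "nat \<Rightarrow> nat \<Rightarrow> real" where
  "magn n k = (2 * real k - real n) / real n"

definition trans_down :: "nat \<Rightarrow> real \<Rightarrow> nat \<Rightarrow> real" where
  "trans_down n \<beta> k = (let s = magn n k in
     (1 + s) / 2 * ((1 - tanh (\<beta> * (s - 1 / real n))) / 2))"

definition trans_up :: "nat \<Rightarrow> real \<Rightarrow> nat \<Rightarrow> real" where
  "trans_up n \<beta> k = (let s = magn n k in
     (1 - s) / 2 * ((1 + tanh (\<beta> * (s + 1 / real n))) / 2))"

definition magn_trans :: "nat \<Rightarrow> real \<Rightarrow> nat \<Rightarrow> nat \<Rightarrow> real" where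
  "magn_trans n \<beta> k k' =
     (if k' + 1 = k then trans_down n \<beta> k
      else if k' = k + 1 then trans_up n \<beta> k
      else if k' = k then 1 - trans_down n \<beta> k - trans_up n \<beta> k
      else 0)"

definition in_target :: "nat \<Rightarrow> nat \<Rightarrow> bool" where
  "in_target n k \<longleftrightarrow> \<bar>magn n k\<bar> \<le> 1 / real n"

text \<open>survive n beta t k = P_k(S_u not in target for all u = 0..t) = P_k(tau_0 > t).\<close>
fun survive :: "nat \<Rightarrow> real \<Rightarrow> nat \<Rightarrow> nat \<Rightarrow> real" where
  "survive n \<beta> 0 k = (if in_target n k then 0 else 1)"
| "survive n \<beta> (Suc t) k = (if in_target n k then 0
      else (\<Sum>k'\<in>{0..n}. magn_trans n \<beta> k k' * survive n \<beta> t k'))"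

definition prob_tau0_gt :: "nat \<Rightarrow> real \<Rightarrow> nat \<Rightarrow> real \<Rightarrow> real" where
  "prob_tau0_gt n \<beta> k t = (if t < 0 then 1 else survive n \<beta> (nat \<lfloor>t\<rfloor>) k)"

definition tn_large :: "(nat \<Rightarrow> real) \<Rightarrow> nat \<Rightarrow> real \<Rightarrow> real" where
  "tn_large \<delta> n \<gamma> = real n / (2 * \<delta> n) * ln (\<delta> n ^ 2 * real n) + (\<gamma> + 3) * real n / \<delta> n"

definition tn_small :: "(nat \<Rightarrow> real) \<Rightarrow> nat \<Rightarrow> real \<Rightarrow> real" where
  "tn_small \<delta> n \<gamma> = (200 + 6 * \<gamma> * (1 + 6 * sqrt (\<delta> n ^ 2 * real n))) * real n powr (3/2)"

end

theory Submission
  imports Defs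
begin

text \<open>
  The second moment x(t) = E S_t^2 obeys, by concavity of tanh on [0,\<infinity>) and Jensen's
  inequality, the recursion x(t+1) \<le> x(t) - (2/n) (\<delta> x(t) + c x(t)^2) + 9/n^2, with c = 1/56
  when \<delta> \<le> 1/2. The quadratic term brings x(t) below a threshold of order \<delta> (resp. n^(-1/2))
  within O(n/\<delta>) (resp. O(n^(3/2))) steps, because 1/x(t) grows linearly; when \<delta>^2 n \<rightarrow> \<infinity> the
  linear term then contracts x(t) geometrically to O(1/(\<delta> n)). By Markov's inequality S_t^2 is
  then small outside an event of probability O(1/\<gamma>). From a state with small |s|, the function
  K (1 - exp(-\<theta>|s|)) + a |s| has one-step drift at most -1 off the target, so it bounds the
  expected hitting time, and Markov's inequality for the hitting time contributes the remaining
  O(1/\<surd>\<gamma>).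
\<close>

section \<open>Elementary inequalities for \<open>tanh\<close> and \<open>exp\<close>\<close>

lemma tanh_diff_le: "a \<le> b \<Longrightarrow> tanh b - tanh a \<le> b - (a::real)"
proof -
  assume ab: "a \<le> b"
  have "(\<lambda>x. x - tanh x) a \<le> (\<lambda>x. x - tanh x) b"
  proof (rule DERIV_nonneg_imp_nondecreasing[OF ab])
    fix x :: real
    show "\<exists>d. ((\<lambda>x. x - tanh x) has_real_derivative d) (at x) \<and> 0 \<le> d"
      by (rule exI[of _ "1 - (1 - tanh x ^ 2)"]) (auto intro!: derivative_eq_intros)
  qed
  thus ?thesis by simp
qed

lemma tanh_le_self: "0 \<le> y \<Longrightarrow> tanh y \<le> (y::real)"
  using tanh_diff_le[of 0 y] by simp

lemma tanh_ge_cubic: "0 \<le> y \<Longrightarrow> y - y^3/3 \<le> tanh (y::real)"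
proof -
  assume y: "0 \<le> y"
  have "(\<lambda>x. tanh x - x + x^3/3) 0 \<le> (\<lambda>x. tanh x - x + x^3/3) y"
  proof (rule DERIV_nonneg_imp_nondecreasing[OF y])
    fix x :: real assume x: "0 \<le> x"
    have "tanh x ^ 2 \<le> x^2" using x tanh_le_self by (simp add: power_mono)
    thus "\<exists>d. ((\<lambda>x. tanh x - x + x^3/3) has_real_derivative d) (at x) \<and> 0 \<le> d"
      by (intro exI[of _ "(1 - tanh x ^ 2) - 1 + 3 * x^2 / 3"]) (auto intro!: derivative_eq_intros)
  qed
  thus ?thesis by simp
qed

lemma tanh_le_cubic: "0 \<le> y \<Longrightarrow> y \<le> 1 \<Longrightarrow> tanh y \<le> (y::real) - y^3/7"
proof -
  assume y: "0 \<le> y" "y \<le> 1"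
  have "(\<lambda>x. x - x^3/7 - tanh x) 0 \<le> (\<lambda>x. x - x^3/7 - tanh x) y"
  proof (rule DERIV_nonneg_imp_nondecreasing[OF y(1)])
    fix x :: real assume x: "0 \<le> x" "x \<le> y"
    have "x^3 \<le> x"
      using x y mult_left_le_one_le[of x "x*x"] mult_le_one[of x x] by (simp add: power3_eq_cube)
    hence "2*x/3 \<le> tanh x" using tanh_ge_cubic[of x] x by linarith
    hence "(2*x/3)^2 \<le> tanh x ^ 2" using x by (intro power_mono) auto
    hence "4 * x^2 / 9 \<le> tanh x ^ 2" by (simp add: power2_eq_square)
    hence "3 * x^2 / 7 \<le> tanh x ^ 2" using zero_le_power2[of x] by linarith
    thus "\<exists>d. ((\<lambda>x. x - x^3/7 - tanh x) has_real_derivative d) (at x) \<and> 0 \<le> d"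
      by (intro exI[of _ "1 - 3 * x^2 / 7 - (1 - tanh x ^ 2)"]) (auto intro!: derivative_eq_intros)
  qed
  thus ?thesis by simp
qed

lemma tanh_add_plus_tanh_diff_le:
  assumes "0 \<le> h" "h \<le> (a::real)"
  shows "tanh (a + h) + tanh (a - h) \<le> 2 * tanh a"
proof -
  define A where "A = tanh a"
  define H where "H = tanh h"
  have tA: "0 \<le> A" "A < 1" using assms by (auto simp: A_def tanh_real_lt_1)
  have tH: "0 \<le> H" "H < 1" using assms by (auto simp: H_def tanh_real_lt_1)
  have AH: "A * H < 1" using tA tH mult_left_le_one_le[of H A] by linarith
  have p: "0 < 1 + A*H" "0 < 1 - A*H" using tA tH AH by (auto intro: add_pos_nonneg)
  have "tanh (a + h) + tanh (a - h) = (A + H) / (1 + A * H) + (A - H) / (1 - A * H)"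
    using tanh_add[of a h] tanh_add[of a "-h"] unfolding A_def H_def by simp
  also have "\<dots> = 2*A*(1 - H^2) / ((1 + A*H)*(1 - A*H))"
    using p by (simp add: field_simps power2_eq_square)
  also have "\<dots> \<le> 2*A"
  proof -
    have "A^2 * H^2 \<le> H^2" using tA mult_left_le_one_le[of "H^2" "A^2"] by (simp add: power_le_one)
    hence "2*A*(1 - H^2) \<le> 2*A*((1 + A*H)*(1 - A*H))"
      using tA by (intro mult_left_mono) (auto simp: algebra_simps power2_eq_square)
    thus ?thesis using p by (simp add: divide_le_eq)
  qed
  finally show ?thesis by (simp add: A_def)
qed

lemma tanh_le_19_20: "y \<le> 6/5 \<Longrightarrow> tanh (y::real) \<le> 19/20"
proof -
  assume y: "y \<le> 6/5"
  have "exp (3::real) = exp 1 ^ 3" using exp_of_nat_mult[of 3 "1::real"] by simp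
  also have "\<dots> \<le> 3 ^ 3" by (intro power_mono exp_le) auto
  finally have "1/27 \<le> exp (-3::real)" by (simp add: exp_minus field_simps)
  also have "exp (-3::real) \<le> exp (-12/5)" by simp
  finally have E: "1/27 \<le> exp (-12/5::real)" .
  have "tanh y \<le> tanh (6/5)" using y by simp
  also have "tanh (6/5::real) = (1 - exp (-12/5)) / (1 + exp (-12/5))"
    by (simp add: tanh_real_altdef)
  also have "\<dots> \<le> 19/20"
    using E add_pos_pos[of 1 "exp (-12/5::real)"] by (simp add: divide_le_eq)
  finally show ?thesis .
qed

lemma tanh_scaled_le_sub_cube:
  fixes d r :: real
  assumes d: "d \<le> 1/2" and r: "0 \<le> r" "r \<le> 1"
  shows "tanh ((1 - d) * r) \<le> (1 - d) * r - r^3 / 56"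
proof (cases "0 \<le> d")
  case True
  define b where "b = 1 - d"
  have b: "1/2 \<le> b" "b \<le> 1" using True d by (auto simp: b_def)
  have "tanh (b * r) \<le> b * r - (b * r)^3 / 7" using b r by (intro tanh_le_cubic) (auto simp: mult_le_one)
  moreover have "1/8 \<le> b^3" using power_mono[OF b(1), of 3] by (simp add: power3_eq_cube)
  hence "r^3 * (1/8) \<le> r^3 * b^3" using r by (intro mult_left_mono) auto
  hence "r^3 / 56 \<le> (b * r)^3 / 7" by (simp add: power_mult_distrib mult_ac)
  ultimately show ?thesis unfolding b_def by linarith
next
  case False
  have "r \<le> (1 - d) * r" using False r mult_nonpos_nonneg[of d r] by (simp add: algebra_simps)
  hence "tanh ((1 - d) * r) - tanh r \<le> (1 - d) * r - r" by (rule tanh_diff_le)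
  moreover have "tanh r \<le> r - r^3 / 7" using tanh_le_cubic r by blast
  moreover have "0 \<le> r^3" using r by simp
  ultimately show ?thesis by linarith
qed

lemma exp_ge_quadratic: "0 \<le> (y::real) \<Longrightarrow> 1 + y + y^2/2 \<le> exp y"
proof -
  assume y: "0 \<le> y"
  have "(\<lambda>x. exp x - 1 - x - x^2/2) 0 \<le> (\<lambda>x. exp x - 1 - x - x^2/2) y"
  proof (rule DERIV_nonneg_imp_nondecreasing[OF y])
    fix x :: real
    have "((\<lambda>x. exp x - 1 - x - x^2/2) has_real_derivative (exp x - 0 - 1 - 2 * x / 2)) (at x)"
      by (auto intro!: derivative_eq_intros)
    moreover have "0 \<le> exp x - 0 - 1 - 2 * x / 2" using exp_ge_add_one_self[of x] by linarith
    ultimately show "\<exists>d. ((\<lambda>x. exp x - 1 - x - x^2/2) has_real_derivative d) (at x) \<and> 0 \<le> d"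
      by blast
  qed
  thus ?thesis by simp
qed

lemma one_minus_power_le_exp:
  assumes "0 \<le> z" "z \<le> 1"
  shows "(1 - z)^t \<le> exp (- z * real t)"
proof -
  have "(1 - z)^t \<le> (exp (- z))^t"
    using assms exp_ge_add_one_self[of "-z"] by (intro power_mono) auto
  also have "\<dots> = exp (- z * real t)" by (simp add: exp_of_nat_mult[symmetric] mult.commute)
  finally show ?thesis .
qed

lemma real_nat_ceiling_le: "0 \<le> (x::real) \<Longrightarrow> real (nat \<lceil>x\<rceil>) \<le> x + 1"
  using of_int_ceiling_le_add_one[of x] by linarith

definition up_rate :: "nat \<Rightarrow> real \<Rightarrow> real \<Rightarrow> real" where
  "up_rate n \<beta> s = (1 - s) / 2 * ((1 + tanh (\<beta> * (s + 1 / real n))) / 2)"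

definition down_rate :: "nat \<Rightarrow> real \<Rightarrow> real \<Rightarrow> real" where
  "down_rate n \<beta> s = (1 + s) / 2 * ((1 - tanh (\<beta> * (s - 1 / real n))) / 2)"

lemma trans_up_eq: "trans_up n \<beta> k = up_rate n \<beta> (magn n k)"
  by (simp add: trans_up_def up_rate_def Let_def)

lemma trans_down_eq: "trans_down n \<beta> k = down_rate n \<beta> (magn n k)"
  by (simp add: trans_down_def down_rate_def Let_def)

lemma up_rate_minus: "up_rate n \<beta> (-s) = down_rate n \<beta> s"
proof -
  have "\<beta> * (- s + 1 / real n) = - (\<beta> * (s - 1 / real n))" by (simp add: algebra_simps)
  thus ?thesis by (simp add: up_rate_def down_rate_def)
qed

lemma down_rate_minus: "down_rate n \<beta> (-s) = up_rate n \<beta> s"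
  using up_rate_minus[of n \<beta> "-s"] by simp

lemma rates_bounds:
  assumes "\<bar>s\<bar> \<le> 1"
  shows "0 \<le> up_rate n \<beta> s" "0 \<le> down_rate n \<beta> s" "up_rate n \<beta> s + down_rate n \<beta> s \<le> 1"
proof -
  have t1: "-1 < tanh (\<beta> * (s + 1 / real n))" "tanh (\<beta> * (s + 1 / real n)) < 1"
    by (auto simp: tanh_real_lt_1 tanh_real_gt_neg1)
  have t2: "-1 < tanh (\<beta> * (s - 1 / real n))" "tanh (\<beta> * (s - 1 / real n)) < 1"
    by (auto simp: tanh_real_lt_1 tanh_real_gt_neg1)
  have s: "0 \<le> 1 - s" "0 \<le> 1 + s" using assms by auto
  show "0 \<le> up_rate n \<beta> s" unfolding up_rate_def using t1 s by (intro mult_nonneg_nonneg) auto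
  show "0 \<le> down_rate n \<beta> s" unfolding down_rate_def using t2 s by (intro mult_nonneg_nonneg) auto
  have "up_rate n \<beta> s \<le> (1 - s)/2" unfolding up_rate_def using t1 s by (intro mult_left_le) auto
  moreover have "down_rate n \<beta> s \<le> (1 + s)/2" unfolding down_rate_def using t2 s
    by (intro mult_left_le) auto
  moreover have "(1 - s)/2 + (1 + s)/2 = 1" by (simp add: field_simps)
  ultimately show "up_rate n \<beta> s + down_rate n \<beta> s \<le> 1" by linarith
qed

lemma down_rate_ge_1_80:
  assumes "0 < n" "0 \<le> r" "r \<le> 1" "0 \<le> \<beta>" "\<beta> \<le> 21/20"
  shows "1/80 \<le> down_rate n \<beta> r"
proof -
  have "0 \<le> 1 / real n" by simp
  hence "r - 1 / real n \<le> 1" using assms(3) by linarith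
  hence "\<beta> * (r - 1 / real n) \<le> \<beta> * 1" using assms(4) by (rule mult_left_mono)
  hence "tanh (\<beta> * (r - 1 / real n)) \<le> 19/20" using assms by (intro tanh_le_19_20) auto
  hence "(1 + r)/2 * (1/40) \<le> (1 + r)/2 * ((1 - tanh (\<beta> * (r - 1 / real n))) / 2)"
    using assms by (intro mult_left_mono) auto
  thus ?thesis using assms by (simp add: down_rate_def)
qed

lemma up_rate_minus_down_rate:
  "up_rate n \<beta> s - down_rate n \<beta> s =
     (-2*s + (tanh (\<beta> * (s + 1 / real n)) + tanh (\<beta> * (s - 1 / real n)))
      - s * (tanh (\<beta> * (s + 1 / real n)) - tanh (\<beta> * (s - 1 / real n)))) / 4"
  by (simp add: up_rate_def down_rate_def field_simps)

lemma nonneg_if_inverse_le: "1 / real n \<le> s \<Longrightarrow> 0 \<le> (s::real)"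
  using order_trans[of 0 "1 / real n" s] by simp

text \<open>The exact discrete drift is compared with the drift \<open>(tanh (\<beta>s) - s)/2\<close> of the
  mean-field equation by concavity of \<open>tanh\<close>.\<close>

lemma up_rate_minus_down_rate_le:
  assumes "0 < n" "1 / real n \<le> s" "0 \<le> \<beta>"
  shows "up_rate n \<beta> s - down_rate n \<beta> s \<le> (tanh (\<beta> * s) - s) / 2"
proof -
  have s0: "0 \<le> s" using assms(2) by (rule nonneg_if_inverse_le)
  have "\<beta> / real n \<le> \<beta> * s" using assms mult_left_mono[OF assms(2) assms(3)] by simp
  hence m: "tanh (\<beta> * s + \<beta> / real n) + tanh (\<beta> * s - \<beta> / real n) \<le> 2 * tanh (\<beta> * s)"
    using assms by (intro tanh_add_plus_tanh_diff_le) auto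
  have e: "\<beta> * (s + 1 / real n) = \<beta> * s + \<beta> / real n" "\<beta> * (s - 1 / real n) = \<beta> * s - \<beta> / real n"
    by (simp_all add: algebra_simps)
  have "0 \<le> s * (tanh (\<beta> * s + \<beta> / real n) - tanh (\<beta> * s - \<beta> / real n))"
    using s0 assms by simp
  thus ?thesis unfolding up_rate_minus_down_rate e using m by simp
qed

lemma up_rate_minus_down_rate_le_linear:
  assumes "0 < n" "d \<le> 1" "1 / real n \<le> r"
  shows "up_rate n (1 - d) r - down_rate n (1 - d) r \<le> - d * r / 2"
proof -
  have r0: "0 \<le> r" using assms(3) by (rule nonneg_if_inverse_le)
  have "tanh ((1 - d) * r) \<le> (1 - d) * r" using assms r0 by (intro tanh_le_self) auto
  thus ?thesis using up_rate_minus_down_rate_le[of n r "1 - d"] assms by (simp add: algebra_simps)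
qed

lemma up_rate_minus_down_rate_le_cubic:
  assumes "0 < n" "d \<le> 1/2" "1 / real n \<le> r" "r \<le> 1"
  shows "up_rate n (1 - d) r - down_rate n (1 - d) r \<le> (- d * r - r^3 / 56) / 2"
proof -
  have r0: "0 \<le> r" using assms(3) by (rule nonneg_if_inverse_le)
  have "tanh ((1 - d) * r) \<le> (1 - d) * r - r^3 / 56" using tanh_scaled_le_sub_cube assms r0 by blast
  thus ?thesis using up_rate_minus_down_rate_le[of n r "1 - d"] assms by (simp add: algebra_simps)
qed

lemma magn_abs_le_1: "0 < n \<Longrightarrow> k \<le> n \<Longrightarrow> \<bar>magn n k\<bar> \<le> 1"
  by (auto simp: magn_def abs_le_iff divide_le_eq le_divide_eq)

lemma magn_Suc: "0 < n \<Longrightarrow> magn n (Suc k) = magn n k + 2 / real n"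
  by (simp add: magn_def field_simps)

lemma magn_diff_1: "0 < n \<Longrightarrow> 1 \<le> k \<Longrightarrow> magn n (k - 1) = magn n k - 2 / real n"
  by (simp add: magn_def field_simps of_nat_diff)

lemma abs_magn_ge_if_not_in_target:
  assumes "0 < n" "\<not> in_target n k"
  shows "2 / real n \<le> \<bar>magn n k\<bar>"
proof -
  define m :: int where "m = 2 * int k - int n"
  have mm: "magn n k = real_of_int m / real n" by (simp add: magn_def m_def)
  have "1 / real n < \<bar>real_of_int m\<bar> / real n" using assms(2) by (simp add: in_target_def mm)
  hence "1 < \<bar>real_of_int m\<bar>" using assms(1) by (simp add: divide_less_cancel)
  hence "2 \<le> \<bar>m\<bar>" by linarith
  hence "2 \<le> \<bar>real_of_int m\<bar>" by linarith
  thus ?thesis using assms(1) by (simp add: mm divide_right_mono)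
qed

definition step_mean :: "nat \<Rightarrow> real \<Rightarrow> (real \<Rightarrow> real) \<Rightarrow> real \<Rightarrow> real" where
  "step_mean n \<beta> F s = F s + down_rate n \<beta> s * (F (s - 2 / real n) - F s)
     + up_rate n \<beta> s * (F (s + 2 / real n) - F s)"

lemma step_mean_minus: "step_mean n \<beta> F (-s) = step_mean n \<beta> (\<lambda>x. F (-x)) s"
  by (simp add: step_mean_def up_rate_minus down_rate_minus algebra_simps)

lemma sum_magn_trans:
  assumes "k \<le> n"
  shows "(\<Sum>k'\<in>{0..n}. magn_trans n \<beta> k k' * g k') =
     trans_down n \<beta> k * g (k - 1) * (if 1 \<le> k then 1 else 0)
   + trans_up n \<beta> k * g (k + 1) * (if k < n then 1 else 0)
   + (1 - trans_down n \<beta> k - trans_up n \<beta> k) * g k"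
proof -
  have "(\<Sum>k'\<in>{0..n}. magn_trans n \<beta> k k' * g k') =
     (\<Sum>k'\<in>{0..n}. (if k' = k - 1 \<and> 1 \<le> k then trans_down n \<beta> k * g k' else 0))
        + (\<Sum>k'\<in>{0..n}. (if k' = k + 1 then trans_up n \<beta> k * g k' else 0))
        + (\<Sum>k'\<in>{0..n}. (if k' = k then (1 - trans_down n \<beta> k - trans_up n \<beta> k) * g k' else 0))"
    unfolding sum.distrib[symmetric] by (rule sum.cong) (auto simp: magn_trans_def)
  also have "(\<Sum>k'\<in>{0..n}. (if k' = k - 1 \<and> 1 \<le> k then trans_down n \<beta> k * g k' else 0))
      = trans_down n \<beta> k * g (k - 1) * (if 1 \<le> k then 1 else 0)"
    using assms by (cases "1 \<le> k") (simp_all add: sum.delta le_trans[OF diff_le_self])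
  finally show ?thesis using assms by (simp add: sum.delta)
qed

lemma sum_magn_trans_magn:
  assumes "0 < n" "k \<le> n"
  shows "(\<Sum>k'\<in>{0..n}. magn_trans n \<beta> k k' * F (magn n k')) = step_mean n \<beta> F (magn n k)"
proof -
  have a: "trans_down n \<beta> k * F (magn n (k - 1)) * (if 1 \<le> k then 1 else 0)
         = down_rate n \<beta> (magn n k) * F (magn n k - 2 / real n)"
  proof (cases "k = 0")
    case False thus ?thesis using assms magn_diff_1[of n k] by (simp add: trans_down_eq)
  qed (use assms in \<open>simp add: trans_down_eq down_rate_def magn_def\<close>)
  have b: "trans_up n \<beta> k * F (magn n (k + 1)) * (if k < n then 1 else 0)
         = up_rate n \<beta> (magn n k) * F (magn n k + 2 / real n)"
  proof (cases "k = n")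
    case False thus ?thesis using assms by (simp add: trans_up_eq magn_Suc)
  qed (use assms in \<open>simp add: trans_up_eq up_rate_def magn_def\<close>)
  show ?thesis unfolding sum_magn_trans[OF assms(2)] a b step_mean_def
    by (simp add: trans_up_eq trans_down_eq algebra_simps)
qed

definition expect_next :: "nat \<Rightarrow> real \<Rightarrow> (nat \<Rightarrow> real) \<Rightarrow> nat \<Rightarrow> real" where
  "expect_next n \<beta> f k = (\<Sum>k'\<in>{0..n}. magn_trans n \<beta> k k' * f k')"

fun expect_iter :: "nat \<Rightarrow> real \<Rightarrow> nat \<Rightarrow> (nat \<Rightarrow> real) \<Rightarrow> nat \<Rightarrow> real" where
  "expect_iter n \<beta> 0 f k = f k"
| "expect_iter n \<beta> (Suc t) f k = expect_next n \<beta> (expect_iter n \<beta> t f) k"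

lemma expect_next_magn:
  "0 < n \<Longrightarrow> k \<le> n \<Longrightarrow> expect_next n \<beta> (\<lambda>j. F (magn n j)) k = step_mean n \<beta> F (magn n k)"
  unfolding expect_next_def by (rule sum_magn_trans_magn)

lemma magn_trans_nonneg:
  assumes "0 < n" "k \<le> n"
  shows "0 \<le> magn_trans n \<beta> k k'"
  using rates_bounds[OF magn_abs_le_1[OF assms], of n \<beta>]
  by (auto simp: magn_trans_def trans_up_eq trans_down_eq)

lemma expect_next_mono:
  assumes "0 < n" "k \<le> n" "\<And>k'. k' \<le> n \<Longrightarrow> f k' \<le> g k'"
  shows "expect_next n \<beta> f k \<le> expect_next n \<beta> g k"
  unfolding expect_next_def using assms magn_trans_nonneg[OF assms(1,2)]
  by (intro sum_mono mult_left_mono) auto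

lemma expect_next_affine:
  assumes "0 < n" "k \<le> n"
  shows "expect_next n \<beta> (\<lambda>j. a * f j + b * g j + c) k
           = a * expect_next n \<beta> f k + b * expect_next n \<beta> g k + c"
proof -
  have "(\<Sum>k'\<in>{0..n}. magn_trans n \<beta> k k') = 1"
    using expect_next_magn[OF assms, of \<beta> "\<lambda>_. 1"] by (simp add: expect_next_def step_mean_def)
  moreover have "expect_next n \<beta> (\<lambda>j. a * f j + b * g j + c) k =
     a * expect_next n \<beta> f k + b * expect_next n \<beta> g k + c * (\<Sum>k'\<in>{0..n}. magn_trans n \<beta> k k')"
    unfolding expect_next_def by (simp add: algebra_simps sum.distrib sum_distrib_left)
  ultimately show ?thesis by simp
qed

lemma expect_next_const: "0 < n \<Longrightarrow> k \<le> n \<Longrightarrow> expect_next n \<beta> (\<lambda>j. c) k = c"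
  using expect_next_affine[where a=0 and b=0] by simp

lemma expect_next_square_ge:
  assumes "0 < n" "k \<le> n"
  shows "(expect_next n \<beta> f k)^2 \<le> expect_next n \<beta> (\<lambda>j. (f j)^2) k"
proof -
  define m where "m = expect_next n \<beta> f k"
  have "0 \<le> expect_next n \<beta> (\<lambda>j. (f j - m)^2) k"
    using expect_next_mono[OF assms, of "\<lambda>_. 0" "\<lambda>j. (f j - m)^2" \<beta>] expect_next_const[OF assms]
    by simp
  also have "(\<lambda>j. (f j - m)^2) = (\<lambda>j. 1 * (f j)^2 + (-2*m) * f j + m^2)"
    by (simp add: power2_eq_square algebra_simps)
  also have "expect_next n \<beta> \<dots> k = expect_next n \<beta> (\<lambda>j. (f j)^2) k - m^2"
    unfolding expect_next_affine[OF assms] by (simp add: m_def power2_eq_square)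
  finally show ?thesis by (simp add: m_def)
qed

lemma expect_iter_Suc_inner:
  "k \<le> n \<Longrightarrow> expect_iter n \<beta> (Suc t) f k = expect_iter n \<beta> t (expect_next n \<beta> f) k"
proof (induction t arbitrary: k)
  case (Suc t)
  have "\<And>x. x \<le> n \<Longrightarrow> expect_iter n \<beta> (Suc t) f x = expect_iter n \<beta> t (expect_next n \<beta> f) x"
    by (rule Suc.IH)
  hence "expect_next n \<beta> (expect_iter n \<beta> (Suc t) f) k
           = expect_next n \<beta> (expect_iter n \<beta> t (expect_next n \<beta> f)) k"
    unfolding expect_next_def by (intro sum.cong refl) auto
  thus ?case by simp
qed (simp add: expect_next_def)

lemma expect_iter_mono:
  assumes "0 < n" "k \<le> n" "\<And>k'. k' \<le> n \<Longrightarrow> f k' \<le> g k'"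
  shows "expect_iter n \<beta> t f k \<le> expect_iter n \<beta> t g k"
  using assms(2) by (induction t arbitrary: k) (auto intro!: expect_next_mono assms)

lemma expect_iter_affine:
  assumes "0 < n" "k \<le> n"
  shows "expect_iter n \<beta> t (\<lambda>j. a * f j + b * g j + c) k
           = a * expect_iter n \<beta> t f k + b * expect_iter n \<beta> t g k + c"
  using assms(2)
proof (induction t arbitrary: k)
  case (Suc t)
  have "expect_iter n \<beta> (Suc t) (\<lambda>j. a * f j + b * g j + c) k
      = expect_next n \<beta> (\<lambda>j. a * expect_iter n \<beta> t f j + b * expect_iter n \<beta> t g j + c) k"
    unfolding expect_iter.simps expect_next_def by (intro sum.cong refl) (simp add: Suc.IH)
  thus ?case using expect_next_affine[OF assms(1) Suc.prems] by simp
qed simp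

lemma expect_iter_bounds:
  assumes "0 < n" "k \<le> n" "\<And>k'. k' \<le> n \<Longrightarrow> a \<le> f k' \<and> f k' \<le> b"
  shows "a \<le> expect_iter n \<beta> t f k" "expect_iter n \<beta> t f k \<le> b"
  using expect_iter_mono[OF assms(1,2), of "\<lambda>_. a" f] expect_iter_mono[OF assms(1,2), of f "\<lambda>_. b"]
    expect_iter_affine[OF assms(1,2), where a=0 and b=0] assms(3) by auto

lemma expect_iter_square_ge:
  assumes "0 < n" "k \<le> n"
  shows "(expect_iter n \<beta> t f k)^2 \<le> expect_iter n \<beta> t (\<lambda>j. (f j)^2) k"
  using assms(2)
proof (induction t arbitrary: k)
  case (Suc t)
  have "(expect_iter n \<beta> (Suc t) f k)^2 \<le> expect_next n \<beta> (\<lambda>j. (expect_iter n \<beta> t f j)^2) k"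
    using expect_next_square_ge[OF assms(1) Suc.prems] by simp
  also have "\<dots> \<le> expect_next n \<beta> (expect_iter n \<beta> t (\<lambda>j. (f j)^2)) k"
    by (rule expect_next_mono[OF assms(1) Suc.prems]) (rule Suc.IH)
  finally show ?case by simp
qed simp

lemma survive_Suc_eq:
  "survive n \<beta> (Suc t) k = (if in_target n k then 0 else expect_next n \<beta> (survive n \<beta> t) k)"
  by (simp add: expect_next_def)

lemma survive_bounds:
  assumes "0 < n" "k \<le> n"
  shows "0 \<le> survive n \<beta> t k \<and> survive n \<beta> t k \<le> 1"
  using assms(2)
proof (induction t arbitrary: k)
  case (Suc t)
  have "0 \<le> expect_next n \<beta> (survive n \<beta> t) k \<and> expect_next n \<beta> (survive n \<beta> t) k \<le> 1"
    using expect_next_mono[OF assms(1) Suc.prems, of "\<lambda>_. 0" "survive n \<beta> t" \<beta>]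
      expect_next_mono[OF assms(1) Suc.prems, of "survive n \<beta> t" "\<lambda>_. 1" \<beta>]
      expect_next_const[OF assms(1) Suc.prems] Suc.IH by auto
  thus ?case unfolding survive_Suc_eq by simp
qed simp

lemma survive_Suc_le:
  assumes "0 < n" "k \<le> n"
  shows "survive n \<beta> (Suc t) k \<le> survive n \<beta> t k"
  using assms(2)
proof (induction t arbitrary: k)
  case 0
  have "expect_next n \<beta> (survive n \<beta> 0) k \<le> expect_next n \<beta> (\<lambda>_. 1) k"
    using survive_bounds[OF assms(1)] by (intro expect_next_mono[OF assms(1) 0]) auto
  thus ?case using expect_next_const[OF assms(1) 0] unfolding survive_Suc_eq by simp
next
  case (Suc t)
  have "expect_next n \<beta> (survive n \<beta> (Suc t)) k \<le> expect_next n \<beta> (survive n \<beta> t) k"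
    by (intro expect_next_mono[OF assms(1) Suc.prems] Suc.IH)
  thus ?case unfolding survive_Suc_eq[of n \<beta> "Suc t"] survive_Suc_eq[of n \<beta> t] by simp
qed

lemma survive_antimono:
  assumes "0 < n" "k \<le> n" "i \<le> t"
  shows "survive n \<beta> t k \<le> survive n \<beta> i k"
  using assms(3)
proof (induction t)
  case (Suc t)
  thus ?case using survive_Suc_le[OF assms(1,2), of \<beta> t] by (cases "i = Suc t") auto
qed simp

text \<open>Markov property at time \<open>t\<^sub>1\<close>: survival up to \<open>t\<^sub>1 + t\<^sub>2\<close> requires survival for
  \<open>t\<^sub>2\<close> more steps from \<open>S\<^bsub>t\<^sub>1\<^esub>\<close>.\<close>

lemma survive_add_le:
  assumes "0 < n" "k \<le> n"
  shows "survive n \<beta> (t1 + t2) k \<le> expect_iter n \<beta> t1 (survive n \<beta> t2) k"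
  using assms(2)
proof (induction t1 arbitrary: k)
  case (Suc t1)
  have nn: "0 \<le> expect_iter n \<beta> (Suc t1) (survive n \<beta> t2) k"
    using expect_iter_bounds(1)[OF assms(1) Suc.prems, of 0 "survive n \<beta> t2" 1]
      survive_bounds[OF assms(1)] by blast
  have "expect_next n \<beta> (survive n \<beta> (t1 + t2)) k
          \<le> expect_next n \<beta> (expect_iter n \<beta> t1 (survive n \<beta> t2)) k"
    by (intro expect_next_mono[OF assms(1) Suc.prems] Suc.IH)
  thus ?case using nn unfolding add_Suc survive_Suc_eq by auto
qed simp

text \<open>Foster--Lyapunov: if \<open>V \<ge> 0\<close> decreases by \<open>1\<close> in expectation off the target, then
  \<open>\<Sum>\<^bsub>i\<le>t\<^esub> P(\<tau>\<^sub>0 > i) \<le> V\<close>, hence \<open>(t+1) P(\<tau>\<^sub>0 > t) \<le> V\<close>.\<close>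

lemma survive_lyapunov:
  assumes "0 < n"
    and V0: "\<And>k. k \<le> n \<Longrightarrow> 0 \<le> V k"
    and Vd: "\<And>k. k \<le> n \<Longrightarrow> \<not> in_target n k \<Longrightarrow> expect_next n \<beta> V k \<le> V k - 1"
    and "k \<le> n"
  shows "real (Suc t) * survive n \<beta> t k \<le> V k"
proof -
  have V1: "1 \<le> V k" if "k \<le> n" "\<not> in_target n k" for k
    using expect_next_mono[OF assms(1) that(1), of "\<lambda>_. 0" V \<beta>] expect_next_const[OF assms(1) that(1)]
      V0 Vd[OF that] by simp
  have sum_le: "(\<Sum>i<Suc t. survive n \<beta> i k) \<le> V k" if "k \<le> n" for t k
    using that
  proof (induction t arbitrary: k)
    case 0 thus ?case using V0 V1 by simp
  next
    case (Suc t)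
    show ?case
    proof (cases "in_target n k")
      case True
      have "survive n \<beta> i k = 0" for i using True by (cases i) auto
      thus ?thesis using V0[OF Suc.prems] by simp
    next
      case False
      have "(\<Sum>i<Suc (Suc t). survive n \<beta> i k) = 1 + (\<Sum>i<Suc t. survive n \<beta> (Suc i) k)"
        using False by (simp add: sum.lessThan_Suc_shift del: sum.lessThan_Suc)
      also have "(\<Sum>i<Suc t. survive n \<beta> (Suc i) k)
          = expect_next n \<beta> (\<lambda>k'. \<Sum>i<Suc t. survive n \<beta> i k') k"
        using False unfolding expect_next_def
        by (simp del: sum.lessThan_Suc) (subst sum.swap, simp only: sum_distrib_left)
      also have "\<dots> \<le> expect_next n \<beta> V k"
        by (intro expect_next_mono[OF assms(1) Suc.prems] Suc.IH)
      finally show ?thesis using Vd[OF Suc.prems False] by simp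
    qed
  qed
  have "real (Suc t) * survive n \<beta> t k = (\<Sum>i<Suc t. survive n \<beta> t k)" by simp
  also have "\<dots> \<le> (\<Sum>i<Suc t. survive n \<beta> i k)"
    by (intro sum_mono survive_antimono[OF assms(1,4)]) auto
  also have "\<dots> \<le> V k" by (rule sum_le[OF assms(4)])
  finally show ?thesis .
qed

section \<open>The second moment of the magnetization\<close>

text \<open>The hypothesis \<open>r tanh(\<beta>r) - r\<^sup>2 \<le> -\<delta>' r\<^sup>2 - c r\<^sup>4\<close> on \<open>[1/n, 1]\<close> is all that is used about
  \<open>\<beta>\<close>; it holds for \<open>\<beta> = 1 - \<delta>\<close> with \<open>c = 1/56\<close> when \<open>\<delta> \<le> 1/2\<close> and with \<open>c = 0\<close> when
  \<open>0 \<le> \<delta> < 1\<close>.\<close>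

lemma magn_times_drift_le:
  assumes n: "0 < n" and s: "1 / real n \<le> s" "s \<le> 1" and b: "0 \<le> \<beta>"
    and H: "s * tanh (\<beta> * s) - s^2 \<le> - \<delta>' * s^2 - c * s^4"
  shows "2 * s * (up_rate n \<beta> s - down_rate n \<beta> s) \<le> - \<delta>' * s^2 - c * s^4"
proof -
  have s0: "0 \<le> s" using s(1) by (rule nonneg_if_inverse_le)
  have "2 * s * (up_rate n \<beta> s - down_rate n \<beta> s) \<le> 2 * s * ((tanh (\<beta> * s) - s) / 2)"
    using up_rate_minus_down_rate_le[OF n s(1) b] s0 by (intro mult_left_mono) auto
  also have "\<dots> = s * tanh (\<beta> * s) - s^2" by (simp add: power2_eq_square field_simps)
  finally show ?thesis using H by linarith
qed

lemma magn_times_drift_le_abs: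
  assumes n: "0 < n" and s: "1 / real n \<le> \<bar>s\<bar>" "\<bar>s\<bar> \<le> 1" and b: "0 \<le> \<beta>"
    and H: "\<And>r. 1 / real n \<le> r \<Longrightarrow> r \<le> 1 \<Longrightarrow> r * tanh (\<beta> * r) - r^2 \<le> - \<delta>' * r^2 - c * r^4"
  shows "2 * s * (up_rate n \<beta> s - down_rate n \<beta> s) \<le> - \<delta>' * s^2 - c * s^4"
proof (cases "0 \<le> s")
  case True thus ?thesis using magn_times_drift_le[OF n _ _ b H] s by simp
next
  case False
  hence "2 * (-s) * (up_rate n \<beta> (-s) - down_rate n \<beta> (-s)) \<le> - \<delta>' * (-s)^2 - c * (-s)^4"
    using magn_times_drift_le[of n "-s", OF n _ _ b H] s by simp
  thus ?thesis by (simp add: up_rate_minus down_rate_minus algebra_simps)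
qed

lemma magn_times_drift_le_small:
  assumes n: "4 \<le> n" and s: "\<bar>s\<bar> < 1 / real n" "\<bar>s\<bar> \<le> 1"
    and dl: "\<bar>\<delta>'\<bar> \<le> 1" and c: "0 \<le> c" "c \<le> 1"
  shows "2 / real n * (2 * s * (up_rate n \<beta> s - down_rate n \<beta> s))
           \<le> - (2 / real n * (\<delta>' * s^2 + c * s^4)) + 5 / (real n)^2"
proof -
  have n0: "0 < real n" using n by simp
  have s2: "s^2 \<le> 1 / (real n)^2"
    using power_mono[of "\<bar>s\<bar>" "1 / real n" 2] s by (simp add: power_divide)
  have "s^2 * s^2 \<le> s^2" using s mult_left_le_one_le[of "s^2" "s^2"] by (simp add: abs_square_le_1)
  hence "s^4 \<le> s^2" by (simp add: power4_eq_xxxx power2_eq_square mult.assoc)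
  moreover have "\<delta>' * s^2 \<le> 1 * s^2" "c * s^4 \<le> 1 * s^4" using dl c by (intro mult_right_mono; simp)+
  ultimately have "\<delta>' * s^2 + c * s^4 \<le> 2 * (1 / (real n)^2)" using s2 by linarith
  hence "2 / real n * (\<delta>' * s^2 + c * s^4) \<le> 2 / real n * (2 * (1 / (real n)^2))"
    by (rule mult_left_mono) (use n0 in simp)
  also have "\<dots> = 4 / real n * (1 / (real n)^2)" by simp
  also have "\<dots> \<le> 1 * (1 / (real n)^2)" using n by (intro mult_right_mono) auto
  finally have quartic: "2 / real n * (\<delta>' * s^2 + c * s^4) \<le> 1 / (real n)^2" by simp
  have "\<bar>up_rate n \<beta> s - down_rate n \<beta> s\<bar> \<le> 1" using rates_bounds[OF s(2), of n \<beta>] by auto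
  hence "2 * \<bar>s\<bar> * \<bar>up_rate n \<beta> s - down_rate n \<beta> s\<bar> \<le> 2 * (1 / real n) * 1"
    using s by (intro mult_mono) auto
  hence "2 * s * (up_rate n \<beta> s - down_rate n \<beta> s) \<le> 2 / real n"
    using abs_ge_self[of "2 * s * (up_rate n \<beta> s - down_rate n \<beta> s)"] by (simp add: abs_mult)
  hence "2 / real n * (2 * s * (up_rate n \<beta> s - down_rate n \<beta> s)) \<le> 2 / real n * (2 / real n)"
    using n0 by (intro mult_left_mono) auto
  thus ?thesis using quartic by (simp add: power2_eq_square)
qed

lemma step_mean_square_le:
  assumes n: "4 \<le> n" and s: "\<bar>s\<bar> \<le> 1" and b: "0 \<le> \<beta>"
    and dl: "\<bar>\<delta>'\<bar> \<le> 1" and c: "0 \<le> c" "c \<le> 1"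
    and H: "\<And>r. 1 / real n \<le> r \<Longrightarrow> r \<le> 1 \<Longrightarrow> r * tanh (\<beta> * r) - r^2 \<le> - \<delta>' * r^2 - c * r^4"
  shows "step_mean n \<beta> (\<lambda>x. x^2) s \<le> s^2 - 2 / real n * (\<delta>' * s^2 + c * s^4) + 9 / (real n)^2"
proof -
  define h where "h = 2 / real n"
  define \<rho> where "\<rho> = up_rate n \<beta> s - down_rate n \<beta> s"
  have eq: "step_mean n \<beta> (\<lambda>x. x^2) s
      = s^2 + h * (2 * s * \<rho>) + h^2 * (up_rate n \<beta> s + down_rate n \<beta> s)"
    unfolding step_mean_def h_def \<rho>_def power2_eq_square
    by (simp add: algebra_simps add_divide_distrib diff_divide_distrib)
  have "h^2 * (up_rate n \<beta> s + down_rate n \<beta> s) \<le> h^2 * 1"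
    using rates_bounds[OF s] by (intro mult_left_mono) auto
  hence diffusion: "h^2 * (up_rate n \<beta> s + down_rate n \<beta> s) \<le> 4 / (real n)^2"
    by (simp add: h_def power2_eq_square)
  have drift: "h * (2 * s * \<rho>) \<le> - (h * (\<delta>' * s^2 + c * s^4)) + 5 / (real n)^2"
  proof (cases "\<bar>s\<bar> < 1 / real n")
    case True thus ?thesis using magn_times_drift_le_small[OF n True s dl c] by (simp add: h_def \<rho>_def)
  next
    case False
    hence "2 * s * \<rho> \<le> - \<delta>' * s^2 - c * s^4"
      unfolding \<rho>_def using magn_times_drift_le_abs[OF _ _ s b H] n by simp
    hence "h * (2 * s * \<rho>) \<le> h * (- \<delta>' * s^2 - c * s^4)" by (rule mult_left_mono) (simp add: h_def)
    moreover have "h * (- \<delta>' * s^2 - c * s^4) = - (h * (\<delta>' * s^2 + c * s^4))" by (simp add: algebra_simps)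
    moreover have "0 \<le> 5 / (real n)^2" by simp
    ultimately show ?thesis by linarith
  qed
  show ?thesis using eq diffusion drift by (simp add: h_def)
qed

definition second_moment :: "nat \<Rightarrow> real \<Rightarrow> nat \<Rightarrow> nat \<Rightarrow> real" where
  "second_moment n \<beta> k t = expect_iter n \<beta> t (\<lambda>j. (magn n j)^2) k"

lemma second_moment_bounds:
  assumes "0 < n" "k \<le> n"
  shows "0 \<le> second_moment n \<beta> k t" "second_moment n \<beta> k t \<le> 1"
  unfolding second_moment_def
  using expect_iter_bounds[OF assms, of 0 "\<lambda>j. (magn n j)^2" 1] magn_abs_le_1[OF assms(1)]
  by (auto simp: abs_square_le_1)

lemma second_moment_Suc_le:
  assumes n: "4 \<le> n" and k: "k \<le> n" and b: "0 \<le> \<beta>"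
    and dl: "\<bar>\<delta>'\<bar> \<le> 1" and c: "0 \<le> c" "c \<le> 1"
    and H: "\<And>r. 1 / real n \<le> r \<Longrightarrow> r \<le> 1 \<Longrightarrow> r * tanh (\<beta> * r) - r^2 \<le> - \<delta>' * r^2 - c * r^4"
  defines "x \<equiv> second_moment n \<beta> k"
  shows "x (Suc t) \<le> x t - 2 / real n * (\<delta>' * x t + c * (x t)^2) + 9 / (real n)^2"
proof -
  have n0: "0 < n" using n by simp
  define W where "W = (\<lambda>j. (magn n j)^2)"
  define a where "a = 1 - 2 / real n * \<delta>'"
  define b where "b = - (2 / real n * c)"
  have step: "expect_next n \<beta> W j \<le> a * W j + b * (W j)^2 + 9 / (real n)^2" if "j \<le> n" for j
  proof -
    have "expect_next n \<beta> W j = step_mean n \<beta> (\<lambda>x. x^2) (magn n j)"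
      unfolding W_def by (rule expect_next_magn[OF n0 that])
    thus ?thesis using step_mean_square_le[OF n magn_abs_le_1[OF n0 that] b dl c H]
      by (simp add: W_def a_def b_def algebra_simps power2_eq_square power4_eq_xxxx)
  qed
  have "x (Suc t) = expect_iter n \<beta> t (expect_next n \<beta> W) k"
    unfolding x_def second_moment_def W_def by (rule expect_iter_Suc_inner[OF k])
  also have "\<dots> \<le> expect_iter n \<beta> t (\<lambda>j. a * W j + b * (W j)^2 + 9 / (real n)^2) k"
    by (rule expect_iter_mono[OF n0 k step])
  also have "\<dots> = a * x t + b * expect_iter n \<beta> t (\<lambda>j. (W j)^2) k + 9 / (real n)^2"
    unfolding x_def second_moment_def W_def by (rule expect_iter_affine[OF n0 k])
  also have "\<dots> \<le> a * x t + b * (x t)^2 + 9 / (real n)^2"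
  proof -
    have "(x t)^2 \<le> expect_iter n \<beta> t (\<lambda>j. (W j)^2) k"
      unfolding x_def second_moment_def W_def by (rule expect_iter_square_ge[OF n0 k])
    moreover have "b \<le> 0" using c n0 by (simp add: b_def)
    ultimately show ?thesis by (simp add: mult_left_mono_neg)
  qed
  finally show ?thesis by (simp add: a_def b_def algebra_simps)
qed

lemma second_moment_map_mono:
  fixes \<delta>' c e :: real
  assumes n: "8 \<le> n" and dl: "\<bar>\<delta>'\<bar> \<le> 1" and c: "0 \<le> c" "c \<le> 1"
    and ab: "0 \<le> a" "a \<le> b" "b \<le> 1"
  shows "a - 2 / real n * (\<delta>' * a + c * a^2) + e \<le> b - 2 / real n * (\<delta>' * b + c * b^2) + e"
proof -
  have n0: "0 < real n" using n by simp
  have "(\<delta>' * b + c * b^2) - (\<delta>' * a + c * a^2) = (b - a) * (\<delta>' + c * (a + b))"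
    by (simp add: algebra_simps power2_eq_square)
  also have "\<dots> \<le> (b - a) * 3"
  proof (rule mult_left_mono)
    have "c * (a + b) \<le> 1 * 2" using c ab by (intro mult_mono) auto
    thus "\<delta>' + c * (a + b) \<le> 3" using dl by linarith
  qed (use ab in auto)
  finally have "(\<delta>' * b + c * b^2) - (\<delta>' * a + c * a^2) \<le> (b - a) * 3" .
  hence "2 / real n * ((\<delta>' * b + c * b^2) - (\<delta>' * a + c * a^2)) \<le> 2 / real n * ((b - a) * 3)"
    by (rule mult_left_mono) (use n0 in simp)
  also have "\<dots> = 6 / real n * (b - a)" by simp
  also have "\<dots> \<le> 1 * (b - a)" using n ab by (intro mult_right_mono) (auto simp: divide_le_eq)
  finally show ?thesis by (simp add: algebra_simps)
qed

text \<open>Under \<open>x\<^sub>t\<^sub>+\<^sub>1 \<le> x\<^sub>t - \<eta> x\<^sub>t\<^sup>2\<close> the reciprocal \<open>1/x\<^sub>t\<close> grows by at least \<open>\<eta>\<close> per step.\<close>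

lemma quadratic_decay_reciprocal:
  fixes x :: "nat \<Rightarrow> real" and G :: "real \<Rightarrow> real"
  assumes xb: "\<And>t. 0 \<le> x t \<and> x t \<le> 1"
    and rec: "\<And>t. x (Suc t) \<le> G (x t)"
    and mono: "\<And>a b. 0 \<le> a \<Longrightarrow> a \<le> b \<Longrightarrow> b \<le> 1 \<Longrightarrow> G a \<le> G b"
    and th: "0 < \<theta>" "\<theta> \<le> 1" "G \<theta> \<le> \<theta>"
    and dec: "\<And>w. \<theta> \<le> w \<Longrightarrow> w \<le> 1 \<Longrightarrow> G w \<le> w - \<eta> * w^2"
  shows "x t \<le> \<theta> \<or> real t * \<eta> \<le> 1 / x t"
proof (induction t)
  case 0 thus ?case using xb[of 0] by simp
next
  case (Suc t)
  show ?case
  proof (cases "x t \<le> \<theta>")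
    case True
    have "x (Suc t) \<le> G (x t)" by (rule rec)
    also have "\<dots> \<le> G \<theta>" using True xb th by (intro mono) auto
    finally show ?thesis using th by simp
  next
    case False
    hence ti: "real t * \<eta> \<le> 1 / x t" using Suc by simp
    have z0: "0 < x t" using False th by simp
    have x1: "x (Suc t) \<le> x t - \<eta> * (x t)^2" using rec[of t] dec[of "x t"] False xb by force
    show ?thesis
    proof (cases "x (Suc t) \<le> \<theta>")
      case False
      hence p: "0 < x (Suc t)" using th by simp
      have "(x t - \<eta> * (x t)^2) * (1 / x t + \<eta>) = 1 - \<eta>^2 * (x t)^2"
        using z0 by (simp add: field_simps power2_eq_square)
      hence "1 / x t + \<eta> \<le> 1 / (x t - \<eta> * (x t)^2)"
        using p x1 by (simp add: le_divide_eq mult.commute)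
      also have "\<dots> \<le> 1 / x (Suc t)" using p x1 by (intro divide_left_mono) auto
      finally show ?thesis using ti by (simp add: algebra_simps)
    qed simp
  qed
qed

lemma quadratic_decay_below:
  fixes x :: "nat \<Rightarrow> real" and G :: "real \<Rightarrow> real"
  assumes xb: "\<And>t. 0 \<le> x t \<and> x t \<le> 1"
    and rec: "\<And>t. x (Suc t) \<le> G (x t)"
    and mono: "\<And>a b. 0 \<le> a \<Longrightarrow> a \<le> b \<Longrightarrow> b \<le> 1 \<Longrightarrow> G a \<le> G b"
    and th: "0 < \<theta>" "\<theta> \<le> 1"
    and eta: "0 < \<eta>"
    and dec: "\<And>w. \<theta> \<le> w \<Longrightarrow> w \<le> 1 \<Longrightarrow> G w \<le> w - \<eta> * w^2"
    and t: "1 / (\<eta> * \<theta>) \<le> real t"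
  shows "x t \<le> \<theta>"
proof (rule ccontr)
  assume "\<not> x t \<le> \<theta>"
  hence xt: "\<theta> < x t" by simp
  have "0 \<le> \<eta> * \<theta>^2" using eta by simp
  hence "G \<theta> \<le> \<theta>" using dec[of \<theta>] th by linarith
  hence "real t * \<eta> \<le> 1 / x t"
    using quadratic_decay_reciprocal[where x=x and G=G and \<theta>=\<theta> and \<eta>=\<eta>, OF xb rec mono th, of t] dec xt
    by auto
  also have "1 / x t < 1 / \<theta>" using xt th by (simp add: frac_less2)
  also have "1 / \<theta> \<le> real t * \<eta>"
    using t th eta by (simp add: divide_le_eq mult.commute mult.left_commute)
  finally show False by simp
qed

lemma affine_recursion_le:
  fixes x :: "nat \<Rightarrow> real"
  assumes rec: "\<And>t. x (Suc t) \<le> q * x t + b"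
    and q: "0 \<le> q" "q < 1" and x0: "x t0 \<le> \<theta>" and b: "0 \<le> b"
  shows "x (t0 + t) \<le> b / (1 - q) + q^t * \<theta>"
proof (induction t)
  case 0
  have "0 \<le> b / (1 - q)" using q b by simp
  thus ?case using x0 by simp
next
  case (Suc t)
  have "x (t0 + Suc t) \<le> q * x (t0 + t) + b" using rec[of "t0 + t"] by simp
  also have "\<dots> \<le> q * (b / (1 - q) + q^t * \<theta>) + b"
    using Suc q by (intro add_right_mono mult_left_mono) auto
  also have "\<dots> = b / (1 - q) + q^(Suc t) * \<theta>" using q by (simp add: field_simps)
  finally show ?case .
qed

lemma second_moment_Suc_le_cubic:
  assumes n: "4 \<le> n" and k: "k \<le> n" and d: "- 1 \<le> d" "d \<le> 1/2"
  shows "second_moment n (1 - d) k (Suc t) \<le> second_moment n (1 - d) k t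
           - 2 / real n * (d * second_moment n (1 - d) k t + 1/56 * (second_moment n (1 - d) k t)^2)
           + 9 / (real n)^2"
proof (rule second_moment_Suc_le[OF n k])
  fix r assume r: "1 / real n \<le> r" "r \<le> 1"
  have r0: "0 \<le> r" using r(1) by (rule nonneg_if_inverse_le)
  have "r * tanh ((1 - d) * r) \<le> r * ((1 - d) * r - r^3 / 56)"
    using tanh_scaled_le_sub_cube[OF d(2) r0 r(2)] r0 by (intro mult_left_mono) auto
  thus "r * tanh ((1 - d) * r) - r^2 \<le> - d * r^2 - 1/56 * r^4"
    by (simp add: algebra_simps power2_eq_square power3_eq_cube power4_eq_xxxx)
qed (use d in auto)

lemma second_moment_Suc_le_linear:
  assumes n: "4 \<le> n" and k: "k \<le> n" and d: "0 \<le> d" "d < 1"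
  shows "second_moment n (1 - d) k (Suc t)
           \<le> (1 - 2 * d / real n) * second_moment n (1 - d) k t + 9 / (real n)^2"
proof -
  have "second_moment n (1 - d) k (Suc t) \<le> second_moment n (1 - d) k t
           - 2 / real n * (d * second_moment n (1 - d) k t + 0 * (second_moment n (1 - d) k t)^2)
           + 9 / (real n)^2"
  proof (rule second_moment_Suc_le[OF n k])
    fix r assume r: "1 / real n \<le> r" "r \<le> 1"
    have r0: "0 \<le> r" using r(1) by (rule nonneg_if_inverse_le)
    have "r * tanh ((1 - d) * r) \<le> r * ((1 - d) * r)"
      using tanh_le_self[of "(1 - d) * r"] d r0 by (intro mult_left_mono) auto
    thus "r * tanh ((1 - d) * r) - r^2 \<le> - d * r^2 - 0 * r^4" by (simp add: algebra_simps power2_eq_square)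
  qed (use d in auto)
  thus ?thesis by (simp add: algebra_simps)
qed

lemma second_moment_le_threshold:
  assumes n: "8 \<le> n" and k: "k \<le> n" and d: "- 1 \<le> d" "d \<le> 1/2" and th: "0 < \<theta>" "\<theta> \<le> 1"
    and small: "\<And>w. \<theta> \<le> w \<Longrightarrow> w \<le> 1 \<Longrightarrow> 9 / (real n)^2 \<le> 2 / real n * (d * w) + w^2 / (56 * real n)"
    and L: "56 * real n / \<theta> \<le> real L"
  shows "second_moment n (1 - d) k L \<le> \<theta>"
proof -
  define G where "G = (\<lambda>w::real. w - 2 / real n * (d * w + 1/56 * w^2) + 9 / (real n)^2)"
  have n0: "0 < real n" using n by simp
  show ?thesis
  proof (rule quadratic_decay_below[where G=G and \<eta>="1 / (56 * real n)"])
    show "0 \<le> second_moment n (1 - d) k t \<and> second_moment n (1 - d) k t \<le> 1" for t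
      using second_moment_bounds[OF _ k] n by simp
    show "second_moment n (1 - d) k (Suc t) \<le> G (second_moment n (1 - d) k t)" for t
      using second_moment_Suc_le_cubic[OF _ k d] n by (simp add: G_def)
    have "\<bar>d\<bar> \<le> 1" using d by auto
    thus "G a \<le> G b" if "0 \<le> a" "a \<le> b" "b \<le> 1" for a b
      unfolding G_def by (rule second_moment_map_mono[OF n _ _ _ that]) auto
    show "G w \<le> w - 1 / (56 * real n) * w^2" if "\<theta> \<le> w" "w \<le> 1" for w
    proof -
      have "G w = w - 2 / real n * (d * w) - 2 * (w^2 / (56 * real n)) + 9 / (real n)^2"
        by (simp add: G_def algebra_simps)
      moreover have "1 / (56 * real n) * w^2 = w^2 / (56 * real n)" by simp
      ultimately show ?thesis using small[OF that] by linarith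
    qed
    show "1 / (1 / (56 * real n) * \<theta>) \<le> real L" using L by simp
  qed (use th n0 in auto)
qed

section \<open>A Lyapunov function for the hitting time\<close>

definition lyap_fun :: "real \<Rightarrow> real \<Rightarrow> real \<Rightarrow> real \<Rightarrow> real" where
  "lyap_fun K \<theta> a x = K * (1 - exp (- \<theta> * \<bar>x\<bar>)) + a * \<bar>x\<bar>"

text \<open>Upper bound for the one-step drift of \<open>lyap_fun K \<theta> a\<close> at \<open>r \<ge> 2/n\<close>, obtained from
  \<open>1 - e\<^sup>-\<^sup>y \<le> y\<close> and \<open>e\<^sup>y - 1 \<ge> y + y\<^sup>2/2\<close> with \<open>y = 2\<theta>/n\<close>.\<close>

definition lyap_drift_bound :: "nat \<Rightarrow> real \<Rightarrow> real \<Rightarrow> real \<Rightarrow> real \<Rightarrow> real \<Rightarrow> real" where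
  "lyap_drift_bound n \<beta> K \<theta> a r =
     K * exp (- \<theta> * r) * (\<theta> * (2 / real n) * (up_rate n \<beta> r - down_rate n \<beta> r)
       - down_rate n \<beta> r * (\<theta> * (2 / real n))^2 / 2)
     + a * (2 / real n) * (up_rate n \<beta> r - down_rate n \<beta> r)"

lemma lyap_fun_nonneg: "0 \<le> K \<Longrightarrow> 0 \<le> \<theta> \<Longrightarrow> 0 \<le> a \<Longrightarrow> 0 \<le> lyap_fun K \<theta> a x"
  unfolding lyap_fun_def by (intro add_nonneg_nonneg mult_nonneg_nonneg) auto

lemma lyap_fun_le: "0 \<le> K \<Longrightarrow> 0 \<le> \<theta> \<Longrightarrow> lyap_fun K \<theta> a x \<le> K + a * \<bar>x\<bar>"
  unfolding lyap_fun_def by (simp add: mult_left_le)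

lemma lyap_fun_abs: "lyap_fun K \<theta> a \<bar>x\<bar> = lyap_fun K \<theta> a x"
  by (simp add: lyap_fun_def)

lemma step_mean_lyap_fun_le:
  assumes n: "0 < n" and s: "2 / real n \<le> s" "s \<le> 1"
    and K: "0 \<le> K" and th: "0 \<le> \<theta>"
  shows "step_mean n \<beta> (lyap_fun K \<theta> a) s \<le> lyap_fun K \<theta> a s + lyap_drift_bound n \<beta> K \<theta> a s"
proof -
  define h where "h = 2 / real n"
  define y where "y = \<theta> * h"
  define e where "e = exp (- \<theta> * s)"
  have h0: "0 < h" using n by (simp add: h_def)
  have y0: "0 \<le> y" using th h0 by (simp add: y_def)
  have e0: "0 < e" by (simp add: e_def)
  have s0: "0 \<le> s - h" using s by (simp add: h_def)
  have ud: "0 \<le> up_rate n \<beta> s" "0 \<le> down_rate n \<beta> s" using rates_bounds[of s] s h0 s0 by (auto simp: h_def)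
  have up: "lyap_fun K \<theta> a (s + h) - lyap_fun K \<theta> a s \<le> K * e * y + a * h"
  proof -
    have "exp (- \<theta> * (s + h)) = e * exp (- y)"
      by (simp add: e_def y_def algebra_simps flip: exp_add)
    hence "lyap_fun K \<theta> a (s + h) - lyap_fun K \<theta> a s = K * e * (1 - exp (- y)) + a * h"
      using s0 h0 by (simp add: lyap_fun_def e_def algebra_simps)
    also have "\<dots> \<le> K * e * y + a * h"
      using exp_ge_add_one_self[of "-y"] K e0 by (intro add_right_mono mult_left_mono) auto
    finally show ?thesis .
  qed
  have down: "lyap_fun K \<theta> a (s - h) - lyap_fun K \<theta> a s \<le> - K * e * (y + y^2/2) - a * h"
  proof -
    have "exp (- \<theta> * (s - h)) = e * exp y"
      by (simp add: e_def y_def algebra_simps flip: exp_add)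
    hence "lyap_fun K \<theta> a (s - h) - lyap_fun K \<theta> a s = - K * e * (exp y - 1) - a * h"
      using s0 h0 by (simp add: lyap_fun_def e_def algebra_simps)
    moreover have "K * e * (y + y^2/2) \<le> K * e * (exp y - 1)"
      using exp_ge_quadratic[OF y0] K e0 by (intro mult_left_mono) auto
    ultimately show ?thesis by simp
  qed
  have "step_mean n \<beta> (lyap_fun K \<theta> a) s \<le> lyap_fun K \<theta> a s
      + down_rate n \<beta> s * (- K * e * (y + y^2/2) - a * h) + up_rate n \<beta> s * (K * e * y + a * h)"
    unfolding step_mean_def h_def[symmetric] using up down ud by (intro add_mono mult_left_mono) auto
  also have "\<dots> = lyap_fun K \<theta> a s + lyap_drift_bound n \<beta> K \<theta> a s"
    by (simp add: lyap_drift_bound_def e_def y_def h_def algebra_simps)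
  finally show ?thesis .
qed

lemma survive_lyap_fun_bound:
  assumes n: "0 < n" and k: "k \<le> n" and K: "0 \<le> K" and th: "0 \<le> \<theta>" and a: "0 \<le> a"
    and H: "\<And>r. 2 / real n \<le> r \<Longrightarrow> r \<le> 1 \<Longrightarrow> lyap_drift_bound n \<beta> K \<theta> a r \<le> -1"
  shows "real (Suc t) * survive n \<beta> t k \<le> lyap_fun K \<theta> a (magn n k)"
proof (rule survive_lyapunov[OF n _ _ k])
  show "0 \<le> lyap_fun K \<theta> a (magn n j)" for j using lyap_fun_nonneg[OF K th a] .
  fix j assume j: "j \<le> n" "\<not> in_target n j"
  define s where "s = magn n j"
  have "step_mean n \<beta> (lyap_fun K \<theta> a) (- s) = step_mean n \<beta> (\<lambda>x. lyap_fun K \<theta> a (- x)) s"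
    by (rule step_mean_minus)
  also have "(\<lambda>x. lyap_fun K \<theta> a (- x)) = lyap_fun K \<theta> a" by (simp add: lyap_fun_def fun_eq_iff)
  finally have sym: "step_mean n \<beta> (lyap_fun K \<theta> a) \<bar>s\<bar> = step_mean n \<beta> (lyap_fun K \<theta> a) s"
    by (cases "0 \<le> s") simp_all
  have s: "2 / real n \<le> \<bar>s\<bar>" "\<bar>s\<bar> \<le> 1"
    using abs_magn_ge_if_not_in_target[OF n j(2)] magn_abs_le_1[OF n j(1)] by (simp_all add: s_def)
  have "step_mean n \<beta> (lyap_fun K \<theta> a) s \<le> lyap_fun K \<theta> a s - 1"
    using step_mean_lyap_fun_le[OF n s K th, of \<beta> a] H[OF s] unfolding sym lyap_fun_abs by simp
  thus "expect_next n \<beta> (\<lambda>j. lyap_fun K \<theta> a (magn n j)) j \<le> lyap_fun K \<theta> a (magn n j) - 1"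
    by (simp add: expect_next_magn[OF n j(1)] s_def)
qed

lemma lyap_exp_term_le:
  fixes K y D \<rho> \<theta> r :: real
  assumes "0 \<le> K" "0 < y" "1/80 \<le> D" "y * \<rho> \<le> y^2 / 320"
  shows "K * exp (- \<theta> * r) * (y * \<rho> - D * y^2 / 2) \<le> - (K * exp (- \<theta> * r) * y^2 / 320)"
proof -
  have "y^2 / 160 \<le> D * y^2 / 2" using mult_right_mono[OF assms(3), of "y^2"] by simp
  hence "y * \<rho> - D * y^2 / 2 \<le> - (y^2 / 320)" using assms(4) by linarith
  hence "K * exp (- \<theta> * r) * (y * \<rho> - D * y^2 / 2) \<le> K * exp (- \<theta> * r) * (- (y^2 / 320))"
    using assms(1) by (intro mult_left_mono) auto
  thus ?thesis by simp
qed

lemma lyap_exp_term_nonpos: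
  fixes K y D \<rho> \<theta> r :: real
  assumes "0 \<le> K" "0 < y" "1/80 \<le> D" "\<rho> \<le> 0"
  shows "K * exp (- \<theta> * r) * (y * \<rho> - D * y^2 / 2) \<le> 0"
proof -
  have "y * \<rho> \<le> y^2 / 320" using assms mult_nonneg_nonpos[of y \<rho>] zero_le_power2[of y] by linarith
  moreover have "0 \<le> K * exp (- \<theta> * r) * y^2 / 320" using assms by simp
  ultimately show ?thesis using lyap_exp_term_le[OF assms(1-3), of \<rho> \<theta> r] by linarith
qed

text \<open>Below \<open>r \<approx> 1/\<theta>\<close> (resp. \<open>r \<approx> X\<close>) the drift bound is negative through the
  exponential term, above it through the linear term.\<close>

lemma lyap_drift_bound_large_delta:
  assumes n: "20 \<le> n" and d: "0 < d" "d < 1" and r: "2 / real n \<le> r" "r \<le> 1"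
  defines "\<theta> \<equiv> sqrt (d * real n)"
  defines "y \<equiv> \<theta> * (2 / real n)"
  defines "K \<equiv> 320 * exp 1 / y^2"
  defines "a \<equiv> real n * \<theta> / d"
  shows "lyap_drift_bound n (1 - d) K \<theta> a r \<le> -1"
proof -
  define \<rho> where "\<rho> = up_rate n (1 - d) r - down_rate n (1 - d) r"
  have n0: "0 < real n" using n by simp
  have th0: "0 < \<theta>" using d n0 by (simp add: \<theta>_def)
  have y0: "0 < y" using th0 n0 by (simp add: y_def)
  have K0: "0 \<le> K" by (simp add: K_def)
  have a0: "0 \<le> a" using th0 d by (simp add: a_def)
  have "0 \<le> 1 / real n" "1 / real n \<le> 2 / real n" using n0 by (simp_all add: divide_right_mono)
  hence r0: "0 \<le> r" and r1n: "1 / real n \<le> r" using r by linarith+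
  have rho: "\<rho> \<le> - d * r / 2" unfolding \<rho>_def using up_rate_minus_down_rate_le_linear r1n d n0 by simp
  moreover have "0 \<le> d * r" using d r0 by simp
  ultimately have rho0: "\<rho> \<le> 0" by linarith
  have D: "1/80 \<le> down_rate n (1 - d) r" using n d r r0 by (intro down_rate_ge_1_80) auto
  have eq: "lyap_drift_bound n (1 - d) K \<theta> a r
      = K * exp (- \<theta> * r) * (y * \<rho> - down_rate n (1 - d) r * y^2 / 2) + a * (2 / real n) * \<rho>"
    by (simp add: lyap_drift_bound_def \<rho>_def y_def)
  show ?thesis
  proof (cases "r \<le> 1 / \<theta>")
    case True
    have "\<theta> * r \<le> 1" using mult_left_mono[OF True, of \<theta>] th0 by simp
    hence "K * exp (-1) * y^2 / 320 \<le> K * exp (- \<theta> * r) * y^2 / 320"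
      using K0 by (intro divide_right_mono mult_right_mono mult_left_mono) auto
    moreover have "K * exp (-1) * y^2 / 320 = 1" using y0 by (simp add: K_def exp_minus)
    moreover have "y * \<rho> \<le> y^2 / 320" using mult_nonneg_nonpos[of y \<rho>] y0 rho0 zero_le_power2[of y] by linarith
    ultimately have "K * exp (- \<theta> * r) * (y * \<rho> - down_rate n (1 - d) r * y^2 / 2) \<le> -1"
      using lyap_exp_term_le[OF K0 y0 D, of \<rho> \<theta> r] by linarith
    moreover have "a * (2 / real n) * \<rho> \<le> 0" using a0 n0 rho0 by (intro mult_nonneg_nonpos) auto
    ultimately show ?thesis unfolding eq by simp
  next
    case False
    have "K * exp (- \<theta> * r) * (y * \<rho> - down_rate n (1 - d) r * y^2 / 2) \<le> 0"
      by (rule lyap_exp_term_nonpos[OF K0 y0 D rho0])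
    moreover have "d * (1 / \<theta>) \<le> d * r" using False d by (intro mult_left_mono) auto
    hence "a * (2 / real n) * \<rho> \<le> a * (2 / real n) * (- d * (1 / \<theta>) / 2)"
      using rho a0 n0 by (intro mult_left_mono) auto
    moreover have "a * (2 / real n) * (- d * (1 / \<theta>) / 2) = -1" using th0 d n0 by (simp add: a_def field_simps)
    ultimately show ?thesis unfolding eq by linarith
  qed
qed

lemma lyap_drift_bound_small_delta:
  assumes n: "20 \<le> n" and d: "d \<le> 1/2" "- \<Delta> \<le> d" and D: "0 < \<Delta>" "\<Delta> \<le> 1/20"
    and r: "2 / real n \<le> r" "r \<le> 1"
  defines "X \<equiv> sqrt (112 * \<Delta>)"
  defines "y \<equiv> 160 * \<Delta> * X"
  defines "\<theta> \<equiv> y * real n / 2"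
  defines "K \<equiv> 640 * exp (\<theta> * X) / y^2"
  defines "a \<equiv> 224 / ((2 / real n) * X^3)"
  shows "lyap_drift_bound n (1 - d) K \<theta> a r \<le> -1"
proof -
  define \<rho> where "\<rho> = up_rate n (1 - d) r - down_rate n (1 - d) r"
  define Dd where "Dd = down_rate n (1 - d) r"
  have n0: "0 < real n" using n by simp
  have X0: "0 < X" using D by (simp add: X_def)
  have X2: "X^2 = 112 * \<Delta>" using D by (simp add: X_def)
  have y0: "0 < y" using D X0 by (simp add: y_def)
  have th0: "0 < \<theta>" using y0 n0 by (simp add: \<theta>_def)
  have K0: "0 \<le> K" by (simp add: K_def)
  have a0: "0 \<le> a" using X0 n0 by (simp add: a_def)
  have "0 \<le> 1 / real n" "1 / real n \<le> 2 / real n" using n0 by (simp_all add: divide_right_mono)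
  hence r0: "0 \<le> r" and r1n: "1 / real n \<le> r" using r by linarith+
  have "- d * r \<le> \<Delta> * r" using d r0 by (intro mult_right_mono) auto
  hence rho: "\<rho> \<le> \<Delta> * r / 2 - r^3 / 112"
    using up_rate_minus_down_rate_le_cubic[OF _ d(1) r1n r(2)] n0 by (simp add: \<rho>_def)
  have Dd: "1/80 \<le> Dd" unfolding Dd_def using n d D r r0 by (intro down_rate_ge_1_80) auto
  have eq: "lyap_drift_bound n (1 - d) K \<theta> a r
      = K * exp (- \<theta> * r) * (y * \<rho> - Dd * y^2 / 2) + a * (2 / real n) * \<rho>"
    using n0 by (simp add: lyap_drift_bound_def \<rho>_def Dd_def \<theta>_def)
  show ?thesis
  proof (cases "r \<le> X")
    case True
    have "\<Delta> * r \<le> \<Delta> * X" using True D by (intro mult_left_mono) auto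
    moreover have "0 \<le> r^3 / 112" using r0 by simp
    ultimately have rhoX: "\<rho> \<le> \<Delta> * X / 2" using rho by linarith
    hence "y * \<rho> \<le> y^2 / 320" using mult_left_mono[OF rhoX, of y] y0 by (simp add: y_def power2_eq_square)
    moreover have "K * exp (- \<theta> * X) * y^2 / 320 \<le> K * exp (- \<theta> * r) * y^2 / 320"
      using K0 mult_left_mono[OF True, of \<theta>] th0
      by (intro divide_right_mono mult_right_mono mult_left_mono) auto
    moreover have "K * exp (- \<theta> * X) * y^2 / 320 = 2" using y0 by (simp add: K_def exp_minus)
    ultimately have "K * exp (- \<theta> * r) * (y * \<rho> - Dd * y^2 / 2) \<le> -2"
      using lyap_exp_term_le[OF K0 y0 Dd, of \<rho> \<theta> r] by linarith
    moreover have "a * (2 / real n) * \<rho> \<le> a * (2 / real n) * (\<Delta> * X / 2)"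
      using rhoX a0 n0 by (intro mult_left_mono) auto
    moreover have "a * (2 / real n) * (\<Delta> * X / 2) = 1"
      using X0 n0 X2 D by (simp add: a_def field_simps power2_eq_square power3_eq_cube)
    ultimately show ?thesis unfolding eq by linarith
  next
    case False
    have "112 * \<Delta> \<le> r^2" using X2 power_mono[of X r 2] False X0 by simp
    hence "112 * \<Delta> * r \<le> r^2 * r" using r0 by (intro mult_right_mono) auto
    hence rho2: "\<rho> \<le> - (r^3 / 224)" using rho by (simp add: power3_eq_cube power2_eq_square)
    moreover have "0 \<le> r^3" using r0 by simp
    ultimately have "\<rho> \<le> 0" by linarith
    hence "K * exp (- \<theta> * r) * (y * \<rho> - Dd * y^2 / 2) \<le> 0" by (rule lyap_exp_term_nonpos[OF K0 y0 Dd])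
    moreover have "X^3 \<le> r^3" using False X0 by (intro power_mono) auto
    hence "a * (2 / real n) * \<rho> \<le> a * (2 / real n) * (- (X^3 / 224))"
      using rho2 a0 n0 by (intro mult_left_mono) auto
    moreover have "a * (2 / real n) * (- (X^3 / 224)) = -1" using X0 n0 by (simp add: a_def field_simps)
    ultimately show ?thesis unfolding eq by linarith
  qed
qed

text \<open>Run \<open>T\<^sub>1\<close> steps, then split on \<open>S\<^sup>2 \<le> R\<close>: the complement has probability at most
  \<open>E S\<^sup>2/R\<close> by Markov's inequality, and from \<open>S\<^sup>2 \<le> R\<close> the Lyapunov bound controls the
  remaining \<open>T\<^sub>2\<close> steps.\<close>

lemma survive_two_phase_le:
  assumes n: "0 < n" and k: "k \<le> n" and R: "0 < R"
    and K: "0 \<le> K" and th: "0 \<le> \<theta>" and a: "0 \<le> a"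
    and H: "\<And>r. 2 / real n \<le> r \<Longrightarrow> r \<le> 1 \<Longrightarrow> lyap_drift_bound n \<beta> K \<theta> a r \<le> -1"
  shows "survive n \<beta> (T1 + T2) k
           \<le> second_moment n \<beta> k T1 / R + (K + a * sqrt R) / real (Suc T2)"
proof -
  define V where "V = (K + a * sqrt R) / real (Suc T2)"
  have V0: "0 \<le> V" using K a R by (simp add: V_def)
  have pw: "survive n \<beta> T2 j \<le> (1 / R) * (magn n j)^2 + 0 * (magn n j)^2 + V" if j: "j \<le> n" for j
  proof (cases "(magn n j)^2 \<le> R")
    case True
    have "\<bar>magn n j\<bar> \<le> sqrt R" using real_sqrt_le_mono[OF True] by simp
    hence "real (Suc T2) * survive n \<beta> T2 j \<le> K + a * sqrt R"
      using survive_lyap_fun_bound[OF n j K th a H, of T2] lyap_fun_le[OF K th, of a "magn n j"]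
        mult_left_mono[of "\<bar>magn n j\<bar>" "sqrt R" a] a by linarith
    hence "survive n \<beta> T2 j \<le> V" by (simp add: V_def le_divide_eq mult.commute)
    moreover have "0 \<le> (1 / R) * (magn n j)^2" using R by simp
    ultimately show ?thesis by simp
  next
    case False
    have "1 \<le> (1 / R) * (magn n j)^2" using False R by (simp add: le_divide_eq)
    moreover have "survive n \<beta> T2 j \<le> 1" using survive_bounds[OF n j] by blast
    ultimately show ?thesis using V0 by linarith
  qed
  have "survive n \<beta> (T1 + T2) k \<le> expect_iter n \<beta> T1 (survive n \<beta> T2) k"
    by (rule survive_add_le[OF n k])
  also have "\<dots> \<le> expect_iter n \<beta> T1 (\<lambda>j. (1 / R) * (magn n j)^2 + 0 * (magn n j)^2 + V) k"
    by (rule expect_iter_mono[OF n k pw])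
  also have "\<dots> = second_moment n \<beta> k T1 / R + V"
    unfolding expect_iter_affine[OF n k] second_moment_def by simp
  finally show ?thesis by (simp add: V_def)
qed

lemma prob_tau0_gt_le_survive:
  assumes "0 < n" "k \<le> n" "real T \<le> t"
  shows "prob_tau0_gt n \<beta> k t \<le> survive n \<beta> T k"
proof -
  have "T \<le> nat \<lfloor>t\<rfloor>" using assms(3) le_nat_floor by blast
  thus ?thesis using assms survive_antimono[OF assms(1,2)] by (simp add: prob_tau0_gt_def)
qed

lemma prob_tau0_gt_le_1: "0 < n \<Longrightarrow> k \<le> n \<Longrightarrow> prob_tau0_gt n \<beta> k t \<le> 1"
  using survive_bounds by (simp add: prob_tau0_gt_def)

lemma divide_plus_sqrt_divide_le:
  assumes "1 \<le> \<gamma>" "0 \<le> a"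
  shows "a / \<gamma> + b * (sqrt \<gamma> / \<gamma>) \<le> (a + b) / sqrt \<gamma>"
proof -
  have s1: "1 \<le> sqrt \<gamma>" using assms by simp
  hence "sqrt \<gamma> * 1 \<le> sqrt \<gamma> * sqrt \<gamma>" by (intro mult_left_mono) auto
  hence "a / \<gamma> \<le> a / sqrt \<gamma>" using s1 assms by (intro divide_left_mono) auto
  moreover have "sqrt \<gamma> / \<gamma> = 1 / sqrt \<gamma>" using assms by (simp add: field_simps)
  ultimately show ?thesis by (simp add: add_divide_distrib)
qed

section \<open>The case \<open>\<delta>\<^sup>2n \<rightarrow> \<infinity>\<close>\<close>

lemma second_moment_le_two_delta:
  assumes n: "20 \<le> n" and k: "k \<le> n" and d: "0 < d" "d < 1" and dn: "504 \<le> d^2 * real n"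
  shows "second_moment n (1 - d) k (nat \<lceil>56 * real n / d\<rceil>) \<le> 2 * d"
proof (cases "d < 1/2")
  case False
  have "second_moment n (1 - d) k (nat \<lceil>56 * real n / d\<rceil>) \<le> 1"
    using second_moment_bounds(2)[OF _ k] n by simp
  thus ?thesis using False by linarith
next
  case True
  have n0: "0 < real n" using n by simp
  have "second_moment n (1 - d) k (nat \<lceil>56 * real n / d\<rceil>) \<le> d"
  proof (rule second_moment_le_threshold[OF _ k])
    fix w assume w: "d \<le> w" "w \<le> 1"
    have "d^2 * real n \<le> w^2 * real n" using w d n0 by (intro mult_right_mono power_mono) auto
    hence "504 \<le> w^2 * real n" using dn by linarith
    hence "9 / (real n)^2 \<le> w^2 / (56 * real n)" using n0 by (simp add: field_simps power2_eq_square)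
    moreover have "0 \<le> 2 / real n * (d * w)" using d w by simp
    ultimately show "9 / (real n)^2 \<le> 2 / real n * (d * w) + w^2 / (56 * real n)" by linarith
  qed (use n d True in \<open>auto intro: real_nat_ceiling_ge\<close>)
  thus ?thesis using d by simp
qed

lemma second_moment_large_delta:
  assumes n: "20 \<le> n" and k: "k \<le> n" and d: "0 < d" "d < 1" and dn: "504 \<le> d^2 * real n"
  defines "L1 \<equiv> nat \<lceil>56 * real n / d\<rceil>"
  defines "L2 \<equiv> nat \<lceil>real n / (2 * d) * ln (d^2 * real n)\<rceil>"
  shows "second_moment n (1 - d) k (L1 + L2) \<le> 13 / (2 * d * real n)"
proof -
  define x where "x = second_moment n (1 - d) k"
  define q where "q = 1 - 2 * d / real n"
  have n0: "0 < real n" using n by simp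
  have q: "0 \<le> q" "q < 1" using d n by (auto simp: q_def divide_le_eq)
  have phase1: "x L1 \<le> 2 * d" unfolding x_def L1_def by (rule second_moment_le_two_delta[OF n k d dn])
  have "x (Suc t) \<le> q * x t + 9 / (real n)^2" for t
    using second_moment_Suc_le_linear[OF _ k, of d t] n d by (simp add: x_def q_def)
  hence "x (L1 + L2) \<le> (9 / (real n)^2) / (1 - q) + q^L2 * (2 * d)"
    using affine_recursion_le[of x q "9 / (real n)^2" L1 "2 * d" L2] q phase1 by simp
  also have "q^L2 \<le> 1 / (d^2 * real n)"
  proof -
    have "ln (d^2 * real n) \<le> 2 * d / real n * real L2"
      using mult_left_mono[OF real_nat_ceiling_ge, of "2 * d / real n" "real n / (2 * d) * ln (d^2 * real n)"]
        d n0 by (simp add: L2_def)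
    hence "exp (- (2 * d / real n) * real L2) \<le> exp (- ln (d^2 * real n))" by simp
    moreover have "q^L2 \<le> exp (- (2 * d / real n) * real L2)" unfolding q_def
      using d n by (intro one_minus_power_le_exp) (auto simp: divide_le_eq)
    moreover have "exp (- ln (d^2 * real n)) = 1 / (d^2 * real n)"
      using d n0 by (simp add: exp_minus inverse_eq_divide)
    ultimately show ?thesis by linarith
  qed
  hence "(9 / (real n)^2) / (1 - q) + q^L2 * (2 * d) \<le> 9 / (2 * d * real n) + 4 / (2 * d * real n)"
    using d n0 mult_right_mono[of "q^L2" "1 / (d^2 * real n)" "2 * d"]
    by (simp add: q_def field_simps power2_eq_square)
  finally show ?thesis by (simp add: x_def add_divide_distrib[symmetric])
qed

lemma survive_large_delta_le:
  assumes n: "20 \<le> n" and k: "k \<le> n" and d: "0 < d" "d < 1" and g: "0 < \<gamma>"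
  shows "survive n (1 - d) (T1 + T2) k
           \<le> second_moment n (1 - d) k T1 * (d * real n / \<gamma>)
             + real n / d * (240 + sqrt \<gamma>) / real (Suc T2)"
proof -
  define \<theta> where "\<theta> = sqrt (d * real n)"
  define y where "y = \<theta> * (2 / real n)"
  define K where "K = 320 * exp 1 / y^2"
  define a where "a = real n * \<theta> / d"
  define R where "R = \<gamma> / (d * real n)"
  have n0: "0 < real n" using n by simp
  have th0: "0 < \<theta>" using d n0 by (simp add: \<theta>_def)
  have "K = 80 * exp 1 * real n / d"
    using d n0 by (simp add: K_def y_def \<theta>_def power_mult_distrib power_divide field_simps power2_eq_square)
  also have "\<dots> \<le> 80 * 3 * real n / d"
    using exp_le d n0 by (intro divide_right_mono mult_right_mono mult_left_mono) auto
  finally have "K \<le> 240 * real n / d" by simp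
  moreover have "a * sqrt R = real n / d * sqrt \<gamma>"
    using d n0 g by (simp add: a_def \<theta>_def R_def real_sqrt_mult[symmetric])
  ultimately have "K + a * sqrt R \<le> real n / d * (240 + sqrt \<gamma>)" by (simp add: algebra_simps)
  hence "(K + a * sqrt R) / real (Suc T2) \<le> real n / d * (240 + sqrt \<gamma>) / real (Suc T2)"
    by (rule divide_right_mono) simp
  moreover have "survive n (1 - d) (T1 + T2) k
           \<le> second_moment n (1 - d) k T1 / R + (K + a * sqrt R) / real (Suc T2)"
  proof (rule survive_two_phase_le[OF _ k])
    show "lyap_drift_bound n (1 - d) K \<theta> a r \<le> -1" if "2 / real n \<le> r" "r \<le> 1" for r
      using lyap_drift_bound_large_delta[OF n d that] by (simp add: K_def y_def a_def \<theta>_def)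
  qed (use n d g th0 in \<open>auto simp: R_def K_def a_def\<close>)
  moreover have "second_moment n (1 - d) k T1 / R = second_moment n (1 - d) k T1 * (d * real n / \<gamma>)"
    by (simp add: R_def)
  ultimately show ?thesis by linarith
qed

lemma large_delta_schedule_le:
  assumes n: "1 \<le> n" and d: "0 < d" "d < 1" and dn: "1 \<le> d^2 * real n" and g: "112 \<le> \<gamma>"
  shows "real (nat \<lceil>56 * real n / d\<rceil> + nat \<lceil>real n / (2 * d) * ln (d^2 * real n)\<rceil>
                + nat \<lfloor>\<gamma> * real n / (2 * d)\<rfloor>)
           \<le> real n / (2 * d) * ln (d^2 * real n) + (\<gamma> + 3) * real n / d"
proof -
  have nd: "1 \<le> real n / d" using d n by (simp add: le_divide_eq)
  have "real (nat \<lceil>56 * real n / d\<rceil>) \<le> 56 * real n / d + 1" using d by (intro real_nat_ceiling_le) simp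
  moreover have "real (nat \<lceil>real n / (2 * d) * ln (d^2 * real n)\<rceil>) \<le> real n / (2 * d) * ln (d^2 * real n) + 1"
    using d dn by (intro real_nat_ceiling_le) simp
  moreover have "real (nat \<lfloor>\<gamma> * real n / (2 * d)\<rfloor>) \<le> \<gamma> * real n / (2 * d)"
    using d g by (intro of_nat_floor) simp
  moreover have "3 * (real n / d) \<le> (\<gamma> + 3) * real n / d - 56 * real n / d - \<gamma> * real n / (2 * d)"
  proof -
    have "3 * (real n / d) \<le> (\<gamma> / 2 - 53) * (real n / d)" using g nd by (intro mult_right_mono) auto
    also have "\<dots> = (\<gamma> + 3) * real n / d - 56 * real n / d - \<gamma> * real n / (2 * d)"
      using d by (simp add: field_simps)
    finally show ?thesis .
  qed
  ultimately show ?thesis using nd unfolding of_nat_add by linarith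
qed

lemma prob_tau0_gt_large_delta:
  assumes n: "20 \<le> n" and d: "0 < d" "d < 1" and dn: "504 \<le> d^2 * real n"
    and g: "112 \<le> \<gamma>" and k: "k \<le> n"
  shows "prob_tau0_gt n (1 - d) k (real n / (2 * d) * ln (d^2 * real n) + (\<gamma> + 3) * real n / d)
           \<le> 500 / sqrt \<gamma>"
proof -
  define L1 where "L1 = nat \<lceil>56 * real n / d\<rceil>"
  define L2 where "L2 = nat \<lceil>real n / (2 * d) * ln (d^2 * real n)\<rceil>"
  define T2 where "T2 = nat \<lfloor>\<gamma> * real n / (2 * d)\<rfloor>"
  have n0: "0 < real n" using n by simp
  have T2: "\<gamma> * real n / (2 * d) \<le> real (Suc T2)" unfolding T2_def by linarith
  have "prob_tau0_gt n (1 - d) k (real n / (2 * d) * ln (d^2 * real n) + (\<gamma> + 3) * real n / d)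
      \<le> survive n (1 - d) ((L1 + L2) + T2) k"
    using large_delta_schedule_le[OF _ d _ g] n k dn
    unfolding L1_def L2_def T2_def by (intro prob_tau0_gt_le_survive) auto
  also have "\<dots> \<le> 13 / (2 * d * real n) * (d * real n / \<gamma>) + real n / d * (240 + sqrt \<gamma>) / (\<gamma> * real n / (2 * d))"
  proof -
    have "second_moment n (1 - d) k (L1 + L2) * (d * real n / \<gamma>) \<le> 13 / (2 * d * real n) * (d * real n / \<gamma>)"
      using second_moment_large_delta[OF n k d dn] d g
      by (intro mult_right_mono) (simp_all add: L1_def L2_def)
    moreover have "real n / d * (240 + sqrt \<gamma>) / real (Suc T2)
        \<le> real n / d * (240 + sqrt \<gamma>) / (\<gamma> * real n / (2 * d))"
      using T2 d g n0 by (intro divide_left_mono) auto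
    ultimately show ?thesis using survive_large_delta_le[OF n k d, of \<gamma> "L1 + L2" T2] g by simp
  qed
  also have "\<dots> = (13 / 2 + 480) / \<gamma> + 2 * (sqrt \<gamma> / \<gamma>)" using d n0 g by (simp add: field_simps)
  also have "\<dots> \<le> (13 / 2 + 480 + 2) / sqrt \<gamma>" using g by (intro divide_plus_sqrt_divide_le) auto
  also have "\<dots> \<le> 500 / sqrt \<gamma>" using g by (intro divide_right_mono) auto
  finally show ?thesis .
qed

section \<open>The case \<open>\<delta>\<^sup>2n = O(1)\<close>\<close>

lemma second_moment_small_delta:
  assumes n: "20 \<le> n" and k: "k \<le> n" and d: "d \<le> 1/2" "- d \<le> \<kappa> / sqrt (real n)"
    and ka: "1 \<le> \<kappa>" and M: "224 * \<kappa> + 32 \<le> sqrt (real n)"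
  defines "L \<equiv> nat \<lceil>56 * (real n * sqrt (real n)) / (224 * \<kappa> + 32)\<rceil>"
  shows "second_moment n (1 - d) k L \<le> (224 * \<kappa> + 32) / sqrt (real n)"
proof (rule second_moment_le_threshold[OF _ k])
  define sn where "sn = sqrt (real n)"
  define M0 where "M0 = 224 * \<kappa> + 32"
  have n0: "0 < real n" using n by simp
  have sn0: "0 < sn" using n0 by (simp add: sn_def)
  have M00: "32 \<le> M0" using ka by (simp add: M0_def)
  have "\<kappa> / sn \<le> 1" using M ka sn0 by (simp add: sn_def divide_le_eq)
  thus "- 1 \<le> d" using d by (simp add: sn_def)
  show "0 < M0 / sn" "M0 / sn \<le> 1" using M00 M sn0 by (simp_all add: M0_def sn_def)
  fix w assume w: "M0 / sn \<le> w" "w \<le> 1"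
  have "0 \<le> M0 / sn" using M00 sn0 by simp
  hence w0: "0 \<le> w" using w by linarith
  have "224 * (\<kappa> / sn) \<le> M0 / sn" using sn0 by (simp add: M0_def divide_right_mono)
  hence "224 * (\<kappa> / sn) * w \<le> w * w" using w w0 by (intro mult_right_mono) auto
  moreover have "- d * w \<le> \<kappa> / sn * w" using d w0 by (intro mult_right_mono) (auto simp: sn_def)
  ultimately have "- d * w \<le> w * w / 224" by linarith
  hence "2 / real n * (- d * w) \<le> 2 / real n * (w * w / 224)" using n0 by (intro mult_left_mono) auto
  hence "- (2 / real n * (d * w)) \<le> w * w / (112 * real n)" by simp
  hence lin: "- (2 / real n * (d * w)) \<le> w^2 / (112 * real n)" by (simp add: power2_eq_square)
  have "1024 \<le> M0^2" using power_mono[OF M00, of 2] by simp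
  hence "1024 / real n \<le> (M0 / sn)^2" using sn0 n0 by (simp add: sn_def power_divide divide_right_mono)
  also have "\<dots> \<le> w^2" using w M00 sn0 by (intro power_mono) auto
  finally have "9 / (real n)^2 \<le> w^2 / (112 * real n)" using n0 by (simp add: field_simps power2_eq_square)
  with lin show "9 / (real n)^2 \<le> 2 / real n * (d * w) + w^2 / (56 * real n)" by simp
qed (use n d in \<open>simp_all add: L_def real_nat_ceiling_ge mult.assoc\<close>)

lemma lyap_constants_small_delta:
  assumes n: "0 < n" and ka: "1 \<le> \<kappa>" and g: "0 < \<gamma>"
  defines "\<Delta> \<equiv> \<kappa> / sqrt (real n)"
  defines "X \<equiv> sqrt (112 * \<Delta>)"
  defines "y \<equiv> 160 * \<Delta> * X"
  defines "\<theta> \<equiv> y * real n / 2"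
  defines "K \<equiv> 640 * exp (\<theta> * X) / y^2"
  defines "a \<equiv> 224 / ((2 / real n) * X^3)"
  shows "K + a * sqrt (\<gamma> * X^2) \<le> (exp (8960 * \<kappa>^2) + sqrt \<gamma>) * (real n * sqrt (real n))"
proof -
  define sn where "sn = sqrt (real n)"
  define E where "E = exp (8960 * \<kappa>^2)"
  have n0: "0 < real n" using n by simp
  have sn0: "0 < sn" using n0 by (simp add: sn_def)
  have sn2: "sn * sn = real n" using n0 by (simp add: sn_def)
  have D0: "0 < \<Delta>" using ka sn0 by (simp add: \<Delta>_def sn_def)
  have X0: "0 < X" using D0 by (simp add: X_def)
  have X2: "X^2 = 112 * \<Delta>" using D0 by (simp add: X_def)
  have "\<theta> * X = 80 * real n * \<Delta> * X^2" by (simp add: \<theta>_def y_def power2_eq_square)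
  also have "\<dots> = 8960 * (real n * \<Delta>^2)" using X2 by (simp add: power2_eq_square)
  also have "real n * \<Delta>^2 = \<kappa>^2" using sn0 sn2 n0 by (simp add: \<Delta>_def sn_def power_divide power2_eq_square)
  finally have thX: "\<theta> * X = 8960 * \<kappa>^2" .
  have "K = 640 * E / (2867200 * \<Delta>^3)"
    using X2 by (simp add: K_def thX E_def y_def power_mult_distrib power2_eq_square power3_eq_cube)
  also have "\<dots> \<le> E / \<Delta>^3" using D0 by (simp add: field_simps E_def)
  also have "E / \<Delta>^3 = E * (real n * sn) / \<kappa>^3"
    using sn0 sn2 ka by (simp add: \<Delta>_def sn_def[symmetric] power_divide power3_eq_cube field_simps)
  also have "\<dots> \<le> E * (real n * sn) / 1"
    using ka sn0 n0 by (intro divide_left_mono) (auto simp: E_def)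
  finally have Kb: "K \<le> E * (real n * sn)" by simp
  have "a * sqrt (\<gamma> * X^2) = 112 * real n * sqrt \<gamma> / X^2"
    using X0 n0 g by (simp add: a_def real_sqrt_mult field_simps power2_eq_square power3_eq_cube)
  also have "\<dots> = real n * sqrt \<gamma> / \<Delta>" using X2 D0 by simp
  also have "\<dots> = real n * sn * sqrt \<gamma> / \<kappa>" using sn0 ka by (simp add: \<Delta>_def sn_def[symmetric] field_simps)
  also have "\<dots> \<le> real n * sn * sqrt \<gamma> / 1" using ka sn0 n0 g by (intro divide_left_mono) auto
  finally show ?thesis using Kb by (simp add: sn_def E_def algebra_simps)
qed

lemma survive_small_delta_le:
  assumes n: "20 \<le> n" and k: "k \<le> n" and d: "d \<le> 1/2" "- d \<le> \<kappa> / sqrt (real n)"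
    and ka: "1 \<le> \<kappa>" and ks: "20 * \<kappa> \<le> sqrt (real n)" and g: "0 < \<gamma>"
  shows "survive n (1 - d) (T1 + T2) k
           \<le> second_moment n (1 - d) k T1 / (112 * \<kappa> * \<gamma> / sqrt (real n))
             + (exp (8960 * \<kappa>^2) + sqrt \<gamma>) * (real n * sqrt (real n)) / real (Suc T2)"
proof -
  define \<Delta> where "\<Delta> = \<kappa> / sqrt (real n)"
  define X where "X = sqrt (112 * \<Delta>)"
  define y where "y = 160 * \<Delta> * X"
  define \<theta> where "\<theta> = y * real n / 2"
  define K where "K = 640 * exp (\<theta> * X) / y^2"
  define a where "a = 224 / ((2 / real n) * X^3)"
  have n0: "0 < real n" using n by simp
  have D0: "0 < \<Delta>" using ka n0 by (simp add: \<Delta>_def)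
  have X0: "0 < X" and y0: "0 < y" using D0 by (simp_all add: X_def y_def)
  have "(K + a * sqrt (\<gamma> * X^2)) / real (Suc T2)
      \<le> (exp (8960 * \<kappa>^2) + sqrt \<gamma>) * (real n * sqrt (real n)) / real (Suc T2)"
    using lyap_constants_small_delta[OF _ ka g, of n] n
    unfolding K_def \<theta>_def y_def a_def X_def \<Delta>_def by (intro divide_right_mono) auto
  moreover have "survive n (1 - d) (T1 + T2) k
      \<le> second_moment n (1 - d) k T1 / (\<gamma> * X^2) + (K + a * sqrt (\<gamma> * X^2)) / real (Suc T2)"
  proof (rule survive_two_phase_le[OF _ k])
    have "\<Delta> \<le> 1/20" using ks n0 by (simp add: \<Delta>_def divide_le_eq)
    moreover have "- \<Delta> \<le> d" using d by (simp add: \<Delta>_def)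
    ultimately show "lyap_drift_bound n (1 - d) K \<theta> a r \<le> -1" if "2 / real n \<le> r" "r \<le> 1" for r
      using lyap_drift_bound_small_delta[OF n d(1) _ D0 _ that]
      by (simp add: K_def y_def a_def \<theta>_def X_def)
  qed (use n g X0 y0 in \<open>auto simp: K_def a_def \<theta>_def\<close>)
  moreover have "\<gamma> * X^2 = 112 * \<kappa> * \<gamma> / sqrt (real n)" using D0 by (simp add: X_def \<Delta>_def)
  ultimately show ?thesis by simp
qed

lemma small_delta_schedule_le:
  assumes n: "1 \<le> n" and M0: "32 \<le> M0" and g: "1 \<le> \<gamma>"
  shows "real (nat \<lceil>56 * (real n * sqrt (real n)) / M0\<rceil> + nat \<lfloor>\<gamma> * (real n * sqrt (real n))\<rfloor>)
           \<le> (200 + 6 * \<gamma> * (1 + 6 * sqrt (d^2 * real n))) * real n powr (3/2)"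
proof -
  define N where "N = real n * sqrt (real n)"
  have N1: "1 \<le> N" using n mult_mono[of 1 "real n" 1 "sqrt (real n)"] by (simp add: N_def)
  have "real (nat \<lceil>56 * N / M0\<rceil>) \<le> 56 * N / M0 + 1" using N1 M0 by (intro real_nat_ceiling_le) simp
  moreover have "56 * N / M0 \<le> 56 * N / 32" using N1 M0 by (intro divide_left_mono) auto
  moreover have "real (nat \<lfloor>\<gamma> * N\<rfloor>) \<le> \<gamma> * N" using g N1 by (intro of_nat_floor) simp
  moreover have "(200 + 6 * \<gamma>) * N \<le> (200 + 6 * \<gamma> * (1 + 6 * sqrt (d^2 * real n))) * N"
    using N1 g by (intro mult_right_mono) simp_all
  moreover have "(200 + 6 * \<gamma>) * N = 200 * N + 6 * (\<gamma> * N)" by (simp add: algebra_simps)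
  moreover have "0 \<le> \<gamma> * N" using g N1 by simp
  moreover have np: "real n powr (3/2) = N"
    using powr_add[of "real n" 1 "1/2"] n by (simp add: N_def powr_half_sqrt)
  ultimately show ?thesis using N1 unfolding np N_def[symmetric] of_nat_add by linarith
qed

lemma prob_tau0_gt_small_delta:
  fixes d \<gamma> \<kappa> :: real
  assumes n: "20 \<le> n" and d: "d \<le> 1/2" "- d \<le> \<kappa> / sqrt (real n)"
    and ka: "1 \<le> \<kappa>" and M: "224 * \<kappa> + 32 \<le> sqrt (real n)"
    and g: "1 \<le> \<gamma>" and k: "k \<le> n"
  shows "prob_tau0_gt n (1 - d) k ((200 + 6 * \<gamma> * (1 + 6 * sqrt (d^2 * real n))) * real n powr (3/2))
           \<le> (224 * \<kappa> + 33 + exp (8960 * \<kappa>^2)) / sqrt \<gamma>"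
proof -
  define sn where "sn = sqrt (real n)"
  define M0 where "M0 = 224 * \<kappa> + 32"
  define E where "E = exp (8960 * \<kappa>^2)"
  define L1 where "L1 = nat \<lceil>56 * (real n * sn) / M0\<rceil>"
  define T2 where "T2 = nat \<lfloor>\<gamma> * (real n * sn)\<rfloor>"
  have n0: "0 < real n" using n by simp
  have sn0: "0 < sn" using n0 by (simp add: sn_def)
  have M00: "32 \<le> M0" using ka by (simp add: M0_def)
  have T2: "\<gamma> * (real n * sn) \<le> real (Suc T2)" unfolding T2_def by linarith
  have "prob_tau0_gt n (1 - d) k ((200 + 6 * \<gamma> * (1 + 6 * sqrt (d^2 * real n))) * real n powr (3/2))
           \<le> survive n (1 - d) (L1 + T2) k"
    using small_delta_schedule_le[OF _ M00 g, of n d] n k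
    unfolding L1_def T2_def sn_def by (intro prob_tau0_gt_le_survive) auto
  also have "\<dots> \<le> (M0 / sn) / (112 * \<kappa> * \<gamma> / sn) + (E + sqrt \<gamma>) * (real n * sn) / (\<gamma> * (real n * sn))"
  proof -
    have "20 * \<kappa> \<le> sn" using M ka by (simp add: sn_def)
    hence "survive n (1 - d) (L1 + T2) k \<le> second_moment n (1 - d) k L1 / (112 * \<kappa> * \<gamma> / sn)
        + (E + sqrt \<gamma>) * (real n * sn) / real (Suc T2)"
      using survive_small_delta_le[OF n k d ka, of \<gamma> L1 T2] g by (simp add: sn_def E_def)
    moreover have "second_moment n (1 - d) k L1 / (112 * \<kappa> * \<gamma> / sn) \<le> (M0 / sn) / (112 * \<kappa> * \<gamma> / sn)"
      using second_moment_small_delta[OF n k d ka M] ka g sn0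
      by (intro divide_right_mono) (simp_all add: L1_def M0_def sn_def)
    moreover have "(E + sqrt \<gamma>) * (real n * sn) / real (Suc T2) \<le> (E + sqrt \<gamma>) * (real n * sn) / (\<gamma> * (real n * sn))"
      using T2 g n0 sn0 by (intro divide_left_mono) (auto simp: E_def)
    ultimately show ?thesis by linarith
  qed
  also have "\<dots> \<le> (M0 + E) / \<gamma> + 1 * (sqrt \<gamma> / \<gamma>)"
  proof -
    have "(M0 / sn) / (112 * \<kappa> * \<gamma> / sn) = M0 / (112 * \<kappa> * \<gamma>)" using sn0 by simp
    also have "\<dots> \<le> M0 / \<gamma>"
      using ka g M00 mult_left_mono[of 1 "112 * \<kappa>" \<gamma>] by (intro divide_left_mono) auto
    finally have "(M0 / sn) / (112 * \<kappa> * \<gamma> / sn) \<le> M0 / \<gamma>" .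
    moreover have "(E + sqrt \<gamma>) * (real n * sn) / (\<gamma> * (real n * sn)) = (E + sqrt \<gamma>) / \<gamma>"
      by (rule nonzero_mult_divide_mult_cancel_right) (use n0 sn0 in simp)
    ultimately show ?thesis by (simp add: add_divide_distrib)
  qed
  also have "\<dots> \<le> (M0 + E + 1) / sqrt \<gamma>"
    using M00 by (intro divide_plus_sqrt_divide_le g) (simp add: E_def add_nonneg_nonneg)
  finally show ?thesis by (simp add: M0_def E_def add_ac)
qed

lemma eventually_prob_tau0_gt_le:
  assumes "1 \<le> c"
  shows "eventually (\<lambda>n. \<forall>k\<le>n. prob_tau0_gt n (b n) k (t n) \<le> c) sequentially"
  using eventually_gt_at_top[of "0::nat"]
proof eventually_elim
  case (elim n)
  show ?case using order_trans[OF prob_tau0_gt_le_1[OF elim] assms] by blast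
qed

lemma eventually_prob_tau0_gt_large_delta:
  fixes \<delta> :: "nat \<Rightarrow> real"
  assumes beta_pos: "\<And>n. 0 < 1 - \<delta> n"
    and lower: "eventually (\<lambda>n. - \<delta> n \<le> C / sqrt (real n)) sequentially"
    and lim: "filterlim (\<lambda>n. \<delta> n ^ 2 * real n) at_top sequentially"
    and g: "0 < \<gamma>"
  shows "eventually (\<lambda>n. \<forall>k\<le>n. prob_tau0_gt n (1 - \<delta> n) k (tn_large \<delta> n \<gamma>) \<le> 500 / sqrt \<gamma>)
           sequentially"
proof (cases "\<gamma> < 112")
  case True
  have "sqrt \<gamma> \<le> sqrt (500^2)" using True by (intro real_sqrt_le_mono) simp
  hence "1 \<le> 500 / sqrt \<gamma>" using g by (simp add: le_divide_eq)
  thus ?thesis by (rule eventually_prob_tau0_gt_le)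
next
  case False
  have large: "eventually (\<lambda>n. max 504 (C^2 + 1) \<le> \<delta> n ^ 2 * real n) sequentially"
    using lim unfolding filterlim_at_top by blast
  show ?thesis using eventually_ge_at_top[of 20] large lower
  proof eventually_elim
    case (elim n)
    have d_pos: "0 < \<delta> n"
    proof (rule ccontr)
      assume "\<not> 0 < \<delta> n"
      hence "(- \<delta> n)^2 \<le> (C / sqrt (real n))^2" using elim by (intro power_mono) auto
      hence "\<delta> n ^ 2 * real n \<le> C^2" using elim by (simp add: power_divide le_divide_eq)
      thus False using elim by simp
    qed
    have d1: "\<delta> n < 1" using beta_pos[of n] by simp
    have dn: "504 \<le> \<delta> n ^ 2 * real n" using elim(2) by simp
    have g: "112 \<le> \<gamma>" using False by simp
    show ?case
      unfolding tn_large_def using prob_tau0_gt_large_delta[OF elim(1) d_pos d1 dn g] by blast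
  qed
qed

lemma eventually_prob_tau0_gt_small_delta:
  fixes \<delta> :: "nat \<Rightarrow> real"
  assumes lower: "eventually (\<lambda>n. - \<delta> n \<le> \<kappa> / sqrt (real n)) sequentially"
    and bounded: "(\<lambda>n. \<delta> n ^ 2 * real n) \<in> O(\<lambda>_. 1)"
    and ka: "1 \<le> \<kappa>" and g: "0 < \<gamma>"
  shows "eventually (\<lambda>n. \<forall>k\<le>n. prob_tau0_gt n (1 - \<delta> n) k (tn_small \<delta> n \<gamma>)
           \<le> (224 * \<kappa> + 33 + exp (8960 * \<kappa>^2)) / sqrt \<gamma>) sequentially"
proof (cases "\<gamma> < 1")
  case True
  have "sqrt \<gamma> \<le> 1" using True g by simp
  hence "sqrt \<gamma> \<le> 224 * \<kappa> + 33 + exp (8960 * \<kappa>^2)"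
    using ka exp_gt_zero[of "8960 * \<kappa>^2"] by linarith
  hence "1 \<le> (224 * \<kappa> + 33 + exp (8960 * \<kappa>^2)) / sqrt \<gamma>" using g by (simp add: le_divide_eq)
  thus ?thesis by (rule eventually_prob_tau0_gt_le)
next
  case False
  obtain c0 where c0: "eventually (\<lambda>n. norm (\<delta> n ^ 2 * real n) \<le> c0 * norm (1::real)) sequentially"
    using bounded by (elim landau_o.bigE) blast
  have sqrt_lim: "filterlim (\<lambda>n. sqrt (real n)) at_top sequentially"
    by (rule filterlim_compose[OF sqrt_at_top filterlim_real_sequentially])
  have big_n: "eventually (\<lambda>n. 4 * c0 \<le> real n) sequentially"
    using filterlim_real_sequentially unfolding filterlim_at_top by blast
  have big_sqrt: "eventually (\<lambda>n. 224 * \<kappa> + 32 \<le> sqrt (real n)) sequentially"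
    using sqrt_lim unfolding filterlim_at_top by blast
  show ?thesis using eventually_ge_at_top[of 20] lower c0 big_n big_sqrt
  proof eventually_elim
    case (elim n)
    have "\<delta> n ^ 2 * real n \<le> c0" using elim(3) by simp
    hence "\<delta> n ^ 2 * real n \<le> (1/4) * real n" using elim(4) by linarith
    hence "\<delta> n ^ 2 \<le> 1/4" by (rule mult_right_le_imp_le) (use elim(1) in simp)
    hence "\<delta> n ^ 2 \<le> (1/2)^2" by (simp add: power2_eq_square)
    hence d: "\<delta> n \<le> 1/2" using abs_le_square_iff[of "\<delta> n" "1/2"] by simp
    have g: "1 \<le> \<gamma>" using False by simp
    show ?case
      unfolding tn_small_def using prob_tau0_gt_small_delta[OF elim(1) d elim(2) ka elim(5) g] by blast
  qed
qed

theorem theorem4p3: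
  fixes \<delta> :: "nat \<Rightarrow> real"
  assumes beta_pos: "\<forall>n. 0 < 1 - \<delta> n"
    and beta_upper: "\<exists>C. eventually (\<lambda>n. 1 - \<delta> n \<le> 1 + C / sqrt (real n)) sequentially"
  shows "(filterlim (\<lambda>n. \<delta> n ^ 2 * real n) at_top sequentially \<longrightarrow>
           (\<exists>c>0. \<forall>\<gamma>>0. eventually (\<lambda>n. \<forall>k\<le>n.
              prob_tau0_gt n (1 - \<delta> n) k (tn_large \<delta> n \<gamma>) \<le> c / sqrt \<gamma>) sequentially))
       \<and> ((\<lambda>n. \<delta> n ^ 2 * real n) \<in> O(\<lambda>_. 1) \<longrightarrow>
           (\<exists>c>0. \<forall>\<gamma>>0. eventually (\<lambda>n. \<forall>k\<le>n.
              prob_tau0_gt n (1 - \<delta> n) k (tn_small \<delta> n \<gamma>) \<le> c / sqrt \<gamma>) sequentially))"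
proof (intro conjI impI)
  obtain C where "eventually (\<lambda>n. 1 - \<delta> n \<le> 1 + C / sqrt (real n)) sequentially"
    using beta_upper by blast
  hence lower: "eventually (\<lambda>n. - \<delta> n \<le> max 1 C / sqrt (real n)) sequentially"
  proof eventually_elim
    case (elim n)
    have "C / sqrt (real n) \<le> max 1 C / sqrt (real n)" by (rule divide_right_mono) auto
    thus ?case using elim by linarith
  qed
  show "\<exists>c>0. \<forall>\<gamma>>0. eventually (\<lambda>n. \<forall>k\<le>n.
          prob_tau0_gt n (1 - \<delta> n) k (tn_large \<delta> n \<gamma>) \<le> c / sqrt \<gamma>) sequentially"
    if "filterlim (\<lambda>n. \<delta> n ^ 2 * real n) at_top sequentially"
    using eventually_prob_tau0_gt_large_delta[OF _ lower that] beta_pos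
    by (intro exI[of _ 500] conjI allI impI) auto
  define c where "c = 224 * max 1 C + 33 + exp (8960 * (max 1 C)^2)"
  have "0 < c" using exp_gt_zero[of "8960 * (max 1 C)^2"] max.cobounded1[of 1 C] unfolding c_def by linarith
  thus "\<exists>c>0. \<forall>\<gamma>>0. eventually (\<lambda>n. \<forall>k\<le>n.
          prob_tau0_gt n (1 - \<delta> n) k (tn_small \<delta> n \<gamma>) \<le> c / sqrt \<gamma>) sequentially"
    if "(\<lambda>n. \<delta> n ^ 2 * real n) \<in> O(\<lambda>_. 1)"
    using eventually_prob_tau0_gt_small_delta[OF lower that] unfolding c_def[symmetric]
    by (intro exI[of _ c] conjI allI impI) auto
qed

end
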